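(* Let $\sigma>0$. There exists $R_0=R_0(\sigma,m,n)\ge1$ such that for every $R\ge R_0$ and every $i\in\mathbb{N}$ the following holds. Let $B\subseteq\mathcal{L}^{mn}$ be a ball of radius $\rho(B)<R^{-(m+n)(1+i)}$ such that $\|A\|_\infty\le\sigma$ for all $A\in B$, and suppose there is no pair $(\mathbf{q},A)$ with $\mathbf{q}\in\mathbb{F}[X]^{m+n}$, $A\in B$ satisfying both $$0<\max_{1\le l'\le n}|q_{l'}|<\delta^*R^{m(1+i)}\quad\text{and}\quad \max_{1\le l\le m}|\mathbf{q}\cdot\mathrm{col}_l(\tilde A^* )|<\delta^*R^{-n(1+i)-m}.$$ Then the set of $\mathbf{q}\in\mathbb{F}[X]^{m+n}$ for which there exists $A\in B$ with $$0<\max_{1\le l\le m}|q_l|<\delta R^{n(\tau+i+1)}\quad\text{and}\quad \max_{1\le l'\le n}|\mathbf{q}\cdot \mathrm{col}_{l'}(\tilde A)|<\delta R^{-m(\tau+i+1)-n}$$ contains at most $n$ vectors that are linearly independent over $\mathcal{L}$.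
   Context: $\mathbb{F}$ is the finite field with $k$ elements, $\mathcal{L}=\mathbb{F}((X^{-1}))$ with absolute value $|x|=k^{n}$ where $X^n$ is the leading term of $x$, $\|\mathbf{x}\|_\infty=\max_i|x_i|$; $m\times n$ matrices over $\mathcal{L}$ are identified with $\mathcal{L}^{mn}$ (norm = max of absolute values of entries). For $\mathbf{x},\mathbf{y}\in\mathcal{L}^{m+n}$, $\mathbf{x}\cdot\mathbf{y}=\sum x_iy_i$; $\mathbf{q}=(q_1,\dots,q_{m+n})$. For $A\in\mathcal{L}^{mn}$ define the $(m+n)\times(m+n)$ matrices $\tilde A=\begin{pmatrix}A&I_m\\ I_n&0\end{pmatrix}$ and $\tilde A^*=\begin{pmatrix}A^T&I_n\\ I_m&0\end{pmatrix}$, and $\mathrm{col}_j(M)$ denotes the $j$-th column of $M$. For $R\ge1$ put $\delta=R^{-m(m+n)^2}$, $\delta^*=R^{-n(m+n)^2}$, $\tau=m/(m+n)$. *)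

theory Defs
  imports Complex_Main "HOL-Computational_Algebra.Formal_Laurent_Series"
          "HOL-Computational_Algebra.Polynomial"
begin

text \<open>The field L = F((X^-1)) is modelled by the library type of formal Laurent series
  'a fls in a variable T with finitely many negative powers, where T plays the role of X^-1.
  Thus X corresponds to fls_X_inv, and the leading term X^N of a nonzero x corresponds to
  the lowest T-power T^(-N), i.e. N = - fls_subdegree x.\<close>

definition labs :: "'a::{field,finite} fls \<Rightarrow> real" where
  "labs x = (if x = 0 then 0 else real (card (UNIV :: 'a set)) powi (- fls_subdegree x))"

definition poly_to_L :: "'a::field poly \<Rightarrow> 'a fls" where
  "poly_to_L p = (\<Sum>j\<le>degree p. fls_const (coeff p j) * fls_X_inv ^ j)"

text \<open>Matrices are functions row => column => entry, indices starting at 0.\<close>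
definition matnorm :: "nat \<Rightarrow> nat \<Rightarrow> (nat \<Rightarrow> nat \<Rightarrow> 'a::{field,finite} fls) \<Rightarrow> real" where
  "matnorm m n A = Max {labs (A i j) | i j. i < m \<and> j < n}"

definition matball :: "nat \<Rightarrow> nat \<Rightarrow> (nat \<Rightarrow> nat \<Rightarrow> 'a::{field,finite} fls) \<Rightarrow> real
    \<Rightarrow> (nat \<Rightarrow> nat \<Rightarrow> 'a fls) set" where
  "matball m n A0 r = {A. (\<forall>i j. \<not> (i < m \<and> j < n) \<longrightarrow> A i j = 0) \<and>
                          matnorm m n (\<lambda>i j. A i j - A0 i j) \<le> r}"

text \<open>tilde A = [[A, I_m],[I_n, 0]] for an m x n matrix A; a (m+n) x (m+n) matrix.\<close>
definition tildeA :: "nat \<Rightarrow> nat \<Rightarrow> (nat \<Rightarrow> nat \<Rightarrow> 'a::field fls) \<Rightarrow> nat \<Rightarrow> nat \<Rightarrow> 'a fls" where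
  "tildeA m n A r c =
     (if r < m then (if c < n then A r c else if c - n = r then 1 else 0)
      else (if c < n then (if r - m = c then 1 else 0) else 0))"

text \<open>tilde A^* = [[A^T, I_n],[I_m, 0]]; a (m+n) x (m+n) matrix.\<close>
definition tildeA_star :: "nat \<Rightarrow> nat \<Rightarrow> (nat \<Rightarrow> nat \<Rightarrow> 'a::field fls) \<Rightarrow> nat \<Rightarrow> nat \<Rightarrow> 'a fls" where
  "tildeA_star m n A r c =
     (if r < n then (if c < m then A c r else if c - m = r then 1 else 0)
      else (if c < m then (if r - n = c then 1 else 0) else 0))"

definition col :: "(nat \<Rightarrow> nat \<Rightarrow> 'b) \<Rightarrow> nat \<Rightarrow> nat \<Rightarrow> 'b" where
  "col M j = (\<lambda>r. M r j)"

definition dotp :: "nat \<Rightarrow> (nat \<Rightarrow> 'b::comm_semiring_1) \<Rightarrow> (nat \<Rightarrow> 'b) \<Rightarrow> 'b" where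
  "dotp d x y = (\<Sum>r<d. x r * y r)"

definition lin_indep :: "nat \<Rightarrow> nat \<Rightarrow> (nat \<Rightarrow> nat \<Rightarrow> 'b::field) \<Rightarrow> bool" where
  "lin_indep d t w \<longleftrightarrow>
     (\<forall>c. (\<forall>j<d. (\<Sum>s<t. c s * w s j) = 0) \<longrightarrow> (\<forall>s<t. c s = 0))"

end

theory Submission
  imports Defs "Jordan_Normal_Form.Determinant" "HOL-Library.Function_Algebras"
    "HOL-Library.Cardinality"
begin

text \<open>
  Let A be the centre of B and \<Lambda> = M F[X]^(m+n) with M = [[I_m, 0], [A^T, I_n]], so that
  det M = 1.  Choose integer weights e1, e2 (one for the first m and one for the last n
  coordinates) so that every primal solution v, whose matrix A' lies within the radius of B
  of A, gives a lattice point M v of weighted degree at most 0, while m e1 + n e2 < 0.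
  A reduced basis M q_1, ..., M q_(m+n) of \<Lambda> has weighted degrees \<mu>_j with
  \<Sum> \<mu>_j \<ge> -(m e1 + n e2) > 0.  If n + 1 independent primal solutions existed, at least n + 1
  of the \<mu>_j would be \<le> 0, so the largest one, \<mu>, satisfies (m - 1) \<mu> \<ge> -(m e1 + n e2).
  The dual basis vector belonging to the basis vector of degree \<mu> is a nonzero polynomial
  vector whose dual linear forms have degrees at most -e_i - \<mu>, and this is a dual solution
  excluded by hypothesis.
\<close>

hide_const (open) Matrix.col

section \<open>Degrees in the field of Laurent series\<close>

text \<open>With T = X^-1, deg_le x D says that x has X-degree at most D, i.e. |x| \<le> k^D,
  and is_poly x says that x lies in F[X].\<close>

definition deg_le :: "'a::field fls \<Rightarrow> int \<Rightarrow> bool" where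
  "deg_le x D \<longleftrightarrow> (\<forall>j < -D. fls_nth x j = 0)"

definition is_poly :: "'a::field fls \<Rightarrow> bool" where
  "is_poly x \<longleftrightarrow> (\<forall>j > 0. fls_nth x j = 0)"

lemma deg_le_0 [simp]: "deg_le 0 D"
  by (simp add: deg_le_def)

lemma deg_le_add: "deg_le x D \<Longrightarrow> deg_le y D \<Longrightarrow> deg_le (x + y) D" by (simp add: deg_le_def)

lemma deg_le_sum: "(\<And>j. j \<in> S \<Longrightarrow> deg_le (f j) D) \<Longrightarrow> deg_le (\<Sum>j\<in>S. f j) D"
  by (induction S rule: infinite_finite_induct) (auto intro: deg_le_add)

lemma deg_le_iff_subdegree: "deg_le x D \<longleftrightarrow> x = 0 \<or> - D \<le> fls_subdegree x"
proof
  assume "deg_le x D" thus "x = 0 \<or> - D \<le> fls_subdegree x"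
    by (metis deg_le_def fls_subdegree_geI)
next
  assume "x = 0 \<or> - D \<le> fls_subdegree x" thus "deg_le x D"
    by (auto simp: deg_le_def)
qed

lemma deg_le_mult: "deg_le x a \<Longrightarrow> deg_le y b \<Longrightarrow> deg_le (x * y) (a + b)"
  by (cases "x = 0 \<or> y = 0") (auto simp: deg_le_iff_subdegree fls_subdegree_mult)

lemma fls_nth_mult_deg_le:
  fixes x y :: "'a::field fls"
  assumes "deg_le x a" "deg_le y b"
  shows "fls_nth (x * y) (-(a + b)) = fls_nth x (-a) * fls_nth y (-b)"
proof (cases "x = 0 \<or> y = 0")
  case False
  hence sx: "-a \<le> fls_subdegree x" and sy: "-b \<le> fls_subdegree y"
    using assms by (auto simp: deg_le_iff_subdegree)
  show ?thesis
  proof (cases "fls_subdegree x = -a \<and> fls_subdegree y = -b")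
    case True
    then show ?thesis using fls_times_nth(4)[of x y "-(a + b)"] by simp
  next
    case False
    hence "fls_nth x (-a) = 0 \<or> fls_nth y (-b) = 0" using sx sy by auto
    moreover have "fls_nth (x * y) (-(a + b)) = 0"
      using False sx sy by (intro fls_times_nth_eq0) auto
    ultimately show ?thesis by auto
  qed
qed auto

lemma deg_le_prod: "(\<And>i. i \<in> S \<Longrightarrow> deg_le (f i) (g i)) \<Longrightarrow> deg_le (\<Prod>i\<in>S. f i) (\<Sum>i\<in>S. g i)"
proof (induction S rule: infinite_finite_induct)
  case (infinite A) thus ?case by (simp add: deg_le_def)
next
  case empty thus ?case by (simp add: deg_le_def)
next
  case (insert x F) thus ?case by (simp add: deg_le_mult)
qed

lemma deg_le_monom: "deg_le (fls_const c * fls_X_inv ^ k) (int k)"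
  by (simp add: deg_le_def)

lemma is_poly_0 [simp]: "is_poly 0"
  by (simp add: is_poly_def)

lemma is_poly_1 [simp]: "is_poly 1"
  by (simp add: is_poly_def)

lemma is_poly_add: "is_poly x \<Longrightarrow> is_poly y \<Longrightarrow> is_poly (x + y)" by (simp add: is_poly_def)

lemma is_poly_diff: "is_poly x \<Longrightarrow> is_poly y \<Longrightarrow> is_poly (x - y)" by (simp add: is_poly_def)

lemma is_poly_const: "is_poly (fls_const c)" by (simp add: is_poly_def)

lemma is_poly_monom: "is_poly (fls_const c * fls_X_inv ^ k)" by (simp add: is_poly_def)

lemma is_poly_mult:
  fixes x y :: "'a::field fls"
  assumes "is_poly x" "is_poly y" shows "is_poly (x * y)"
  unfolding is_poly_def
proof (intro allI impI)
  fix j :: int assume j: "j > 0"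
  have "fls_nth (x * y) j = (\<Sum>i=fls_subdegree x..j - fls_subdegree y. fls_nth x i * fls_nth y (j - i))"
    by (rule fls_times_nth(2))
  also have "\<dots> = 0"
  proof (rule sum.neutral, intro ballI)
    fix i assume "i \<in> {fls_subdegree x..j - fls_subdegree y}"
    show "fls_nth x i * fls_nth y (j - i) = 0"
    proof (cases "i > 0")
      case True thus ?thesis using assms(1) by (simp add: is_poly_def)
    next
      case False thus ?thesis using assms(2) j by (simp add: is_poly_def)
    qed
  qed
  finally show "fls_nth (x * y) j = 0" .
qed

lemma is_poly_sum: "(\<And>j. j \<in> S \<Longrightarrow> is_poly (f j)) \<Longrightarrow> is_poly (\<Sum>j\<in>S. f j)"
  by (induction S rule: infinite_finite_induct) (auto intro: is_poly_add)

lemma is_poly_prod: "(\<And>j. j \<in> S \<Longrightarrow> is_poly (f j)) \<Longrightarrow> is_poly (\<Prod>j\<in>S. f j)"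
  by (induction S rule: infinite_finite_induct) (auto intro: is_poly_mult)

lemma is_poly_of_int: "is_poly (of_int z :: 'a::field fls)"
  by (simp add: fls_of_int is_poly_const)

lemma is_poly_deg_le_neg: "is_poly x \<Longrightarrow> deg_le x D \<Longrightarrow> D < 0 \<Longrightarrow> x = 0"
  unfolding is_poly_def deg_le_def
  by (metis fls_zero_eqI linorder_not_le order_le_less_trans neg_0_less_iff_less)

lemma is_poly_subdegree_le: "is_poly x \<Longrightarrow> x \<noteq> 0 \<Longrightarrow> fls_subdegree x \<le> 0"
  by (metis nth_fls_subdegree_nonzero is_poly_def not_le)

lemma poly_to_L_nth: "fls_nth (poly_to_L p) j = (if j \<le> 0 then coeff p (nat (-j)) else 0)"
proof -
  have "fls_nth (poly_to_L p) j = (\<Sum>t\<le>degree p. coeff p t * (if j = - int t then 1 else 0))"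
    unfolding poly_to_L_def fls_nth_sum by (simp add: fls_X_inv_power_nth)
  also have "\<dots> = (\<Sum>t\<in>{..degree p} \<inter> {t. j = - int t}. coeff p t)"
    by (simp add: sum.inter_restrict if_distrib cong: if_cong)
  also have "\<dots> = (if j \<le> 0 then coeff p (nat (-j)) else 0)"
  proof (cases "j \<le> 0")
    case True
    show ?thesis
    proof (cases "nat (-j) \<le> degree p")
      case True2: True
      have "{..degree p} \<inter> {t. j = - int t} = {nat (-j)}" using True True2 by auto
      thus ?thesis using True by simp
    next
      case False
      have "{..degree p} \<inter> {t. j = - int t} = {}" using True False by auto
      thus ?thesis using True False by (simp add: coeff_eq_0)
    qed
  next
    case False
    have "{..degree p} \<inter> {t. j = - int t} = {}" using False by auto
    thus ?thesis using False by simp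
  qed
  finally show ?thesis .
qed

lemma is_poly_poly_to_L: "is_poly (poly_to_L p)"
  by (simp add: is_poly_def poly_to_L_nth)

lemma is_poly_imp_poly_to_L:
  fixes x :: "'a::field fls"
  assumes "is_poly x"
  shows "\<exists>p. poly_to_L p = x"
proof -
  have fin: "\<forall>\<^sub>\<infinity>k. fls_nth x (- int k) = 0" by simp
  define p where "p = Abs_poly (\<lambda>k. fls_nth x (- int k))"
  have "coeff p = (\<lambda>k. fls_nth x (- int k))"
    unfolding p_def by (rule Abs_poly_inverse) (use fin in simp)
  hence cp: "coeff p k = fls_nth x (- int k)" for k by simp
  have "poly_to_L p = x"
  proof (rule fls_eqI)
    fix j show "fls_nth (poly_to_L p) j = fls_nth x j"
      using assms by (auto simp: poly_to_L_nth cp is_poly_def)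
  qed
  thus ?thesis by blast
qed


section \<open>The absolute value\<close>

lemma card_field_gt_1: "1 < real (card (UNIV :: 'a::{field,finite} set))"
proof -
  have "card {0::'a, 1} \<le> CARD('a)" by (intro card_mono) auto
  thus ?thesis by simp
qed

lemma power_int_less_iff: "(a::real) > 1 \<Longrightarrow> a powi x < a powi y \<longleftrightarrow> x < y"
  by (metis linorder_not_le power_int_increasing power_int_strict_increasing less_imp_le order_le_less_trans)

lemma power_int_le_iff: "(a::real) > 1 \<Longrightarrow> a powi x \<le> a powi y \<longleftrightarrow> x \<le> y"
  by (meson linorder_not_le power_int_less_iff)

lemma labs_nonneg: "labs x \<ge> 0"
  by (simp add: labs_def)

lemma labs_pos: "x \<noteq> 0 \<Longrightarrow> labs x > 0"
  by (simp add: labs_def card_gt_0_iff)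

lemma labs_0 [simp]: "labs 0 = 0"
  by (simp add: labs_def)

lemma labs_uminus [simp]: "labs (- x) = labs x"
  by (simp add: labs_def)

lemma labs_mult: "labs ((x::'a::{field,finite} fls) * y) = labs x * labs y"
proof (cases "x = 0 \<or> y = 0")
  case False
  have "real CARD('a) \<noteq> 0" using card_field_gt_1[where 'a='a] by simp
  with False show ?thesis
    by (simp add: labs_def fls_subdegree_mult power_int_add[symmetric] algebra_simps)
qed auto

lemma labs_add: "labs ((x::'a::{field,finite} fls) + y) \<le> max (labs x) (labs y)"
proof (cases "x = 0 \<or> y = 0 \<or> x + y = 0")
  case True thus ?thesis using labs_nonneg[of x] by (auto simp: max_def)
next
  case False
  have "fls_subdegree (x + y) \<ge> min (fls_subdegree x) (fls_subdegree y)"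
    using False by (intro fls_plus_subdegree) auto
  hence "- fls_subdegree (x + y) \<le> - fls_subdegree x \<or> - fls_subdegree (x + y) \<le> - fls_subdegree y"
    by linarith
  thus ?thesis using False card_field_gt_1[where 'a='a]
    by (auto simp: labs_def power_int_le_iff max_def)
qed

lemma labs_minus_commute: "labs ((x::'a::{field,finite} fls) - y) = labs (y - x)"
  by (metis labs_uminus minus_diff_eq)

lemma labs_sum_less:
  fixes f :: "'b \<Rightarrow> 'a::{field,finite} fls"
  assumes "C > 0" "\<And>j. j \<in> S \<Longrightarrow> labs (f j) < C"
  shows "labs (\<Sum>j\<in>S. f j) < C"
  using assms(2)
proof (induction S rule: infinite_finite_induct)
  case (insert x F)
  have "labs (f x + sum f F) \<le> max (labs (f x)) (labs (sum f F))" by (rule labs_add)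
  also have "\<dots> < C" using insert by auto
  finally show ?case using insert by simp
qed (use assms(1) in auto)

lemma labs_less_imp_deg_le:
  "labs (x::'a::{field,finite} fls) < real CARD('a) powi (D + 1) \<Longrightarrow> deg_le x D"
proof (cases "x = 0")
  case False
  assume "labs x < real CARD('a) powi (D + 1)"
  hence "- fls_subdegree x < D + 1"
    using False card_field_gt_1[where 'a='a] by (simp add: labs_def power_int_less_iff)
  thus ?thesis by (simp add: deg_le_iff_subdegree)
qed simp

lemma deg_le_imp_labs_le:
  "deg_le (x::'a::{field,finite} fls) D \<Longrightarrow> labs x \<le> real CARD('a) powi D"
proof (cases "x = 0")
  case False
  assume "deg_le x D"
  hence "- fls_subdegree x \<le> D" using False by (simp add: deg_le_iff_subdegree)
  thus ?thesis using False card_field_gt_1[where 'a='a] by (simp add: labs_def power_int_le_iff)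
qed (use card_field_gt_1[where 'a='a] in simp)

lemma labs_le_matnorm:
  assumes "a < m" "b < n"
  shows "labs (A a b) \<le> matnorm m n A"
proof -
  have "{labs (A i j) | i j. i < m \<and> j < n} = (\<lambda>(i, j). labs (A i j)) ` ({..<m} \<times> {..<n})"
    by auto
  hence "finite {labs (A i j) | i j. i < m \<and> j < n}" by simp
  thus ?thesis unfolding matnorm_def by (rule Max_ge) (use assms in blast)
qed

lemma matnorm_zero:
  assumes "m \<ge> 1" "n \<ge> 1" "\<And>i j. i < m \<Longrightarrow> j < n \<Longrightarrow> A i j = 0"
  shows "matnorm m n A = 0"
proof -
  have "{labs (A i j) | i j. i < m \<and> j < n} = {0}"
    using assms by (auto intro!: exI[of _ 0])
  thus ?thesis by (simp add: matnorm_def)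
qed

section \<open>Weighted degrees and reduced bases\<close>

text \<open>Vectors v \<in> L^d are measured by the weighted degree max_i (deg v_i - ew i); its leading
  coefficient vector at level D collects the coefficients of X^(D + ew i).\<close>
definition wdeg_le :: "nat \<Rightarrow> (nat \<Rightarrow> int) \<Rightarrow> (nat \<Rightarrow> 'a::field fls) \<Rightarrow> int \<Rightarrow> bool" where
  "wdeg_le d ew v D \<longleftrightarrow> (\<forall>i<d. deg_le (v i) (D + ew i))"

definition wdeg :: "nat \<Rightarrow> (nat \<Rightarrow> int) \<Rightarrow> (nat \<Rightarrow> 'a::field fls) \<Rightarrow> int" where
  "wdeg d ew v = Max ((\<lambda>i. - fls_subdegree (v i) - ew i) ` {i. i < d \<and> v i \<noteq> 0})"

definition lead_vec :: "(nat \<Rightarrow> int) \<Rightarrow> (nat \<Rightarrow> 'a::field fls) \<Rightarrow> int \<Rightarrow> nat \<Rightarrow> 'a" where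
  "lead_vec ew v D i = fls_nth (v i) (-(D + ew i))"

definition nonzero_vec :: "nat \<Rightarrow> (nat \<Rightarrow> 'a::field fls) \<Rightarrow> bool" where
  "nonzero_vec d v \<longleftrightarrow> (\<exists>i<d. v i \<noteq> 0)"

lemma wdeg_ge: "i < d \<Longrightarrow> v i \<noteq> 0 \<Longrightarrow> - fls_subdegree (v i) - ew i \<le> wdeg d ew v"
  unfolding wdeg_def by (rule Max_ge) auto

lemma wdeg_attained:
  assumes "nonzero_vec d v"
  obtains i where "i < d" "v i \<noteq> 0" "wdeg d ew v = - fls_subdegree (v i) - ew i"
proof -
  have "{i. i < d \<and> v i \<noteq> 0} \<noteq> {}" using assms by (auto simp: nonzero_vec_def)
  hence "wdeg d ew v \<in> (\<lambda>i. - fls_subdegree (v i) - ew i) ` {i. i < d \<and> v i \<noteq> 0}"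
    unfolding wdeg_def by (intro Max_in) auto
  thus ?thesis using that by auto
qed

lemma wdeg_le_wdeg: "wdeg_le d ew v (wdeg d ew v)"
  unfolding wdeg_le_def
proof (intro allI impI)
  fix i assume "i < d"
  then show "deg_le (v i) (wdeg d ew v + ew i)"
    using wdeg_ge[of i d v ew] by (cases "v i = 0") (auto simp: deg_le_iff_subdegree)
qed

lemma wdeg_least:
  assumes "nonzero_vec d v" "wdeg_le d ew v D"
  shows "wdeg d ew v \<le> D"
proof -
  obtain i where i: "i < d" "v i \<noteq> 0" "wdeg d ew v = - fls_subdegree (v i) - ew i"
    using wdeg_attained[OF assms(1)] by blast
  with assms(2) have "deg_le (v i) (D + ew i)" by (auto simp: wdeg_le_def)
  thus ?thesis using i by (auto simp: deg_le_iff_subdegree)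
qed

lemma wdeg_le_decrease:
  assumes "wdeg_le d ew v D" "\<forall>i<d. lead_vec ew v D i = 0"
  shows "wdeg_le d ew v (D - 1)"
  unfolding wdeg_le_def deg_le_def
proof (intro allI impI)
  fix i j assume "i < d" "j < - (D - 1 + ew i)"
  moreover from this have "j < - (D + ew i) \<or> j = - (D + ew i)" by linarith
  ultimately show "fls_nth (v i) j = 0"
    using assms by (auto simp: wdeg_le_def deg_le_def lead_vec_def)
qed

text \<open>Mahler's reduced bases over F[X]: the leading coefficient vectors are independent over F.\<close>
definition reduced :: "nat \<Rightarrow> (nat \<Rightarrow> int) \<Rightarrow> (nat \<Rightarrow> nat \<Rightarrow> 'a::field fls) \<Rightarrow> bool" where
  "reduced d ew b \<longleftrightarrow> (\<forall>j<d. nonzero_vec d (b j)) \<and>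
     (\<forall>\<alpha>::nat \<Rightarrow> 'a. (\<forall>i<d. (\<Sum>j<d. \<alpha> j * lead_vec ew (b j) (wdeg d ew (b j)) i) = 0)
        \<longrightarrow> (\<forall>j<d. \<alpha> j = 0))"

lemma lincomb_coeff_top:
  fixes b :: "nat \<Rightarrow> nat \<Rightarrow> 'a::field fls"
  assumes "\<And>j. j < d \<Longrightarrow> deg_le (c j) (G - wdeg d ew (b j))" and "i < d"
  shows "fls_nth (\<Sum>j<d. c j * b j i) (-(G + ew i))
           = (\<Sum>j<d. fls_nth (c j) (wdeg d ew (b j) - G) * lead_vec ew (b j) (wdeg d ew (b j)) i)"
  unfolding fls_nth_sum
proof (rule sum.cong)
  fix j assume "j \<in> {..<d}"
  have db: "deg_le (b j i) (wdeg d ew (b j) + ew i)"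
    using wdeg_le_wdeg[of d ew "b j"] \<open>i < d\<close> by (simp add: wdeg_le_def)
  have dc: "deg_le (c j) (G - wdeg d ew (b j))" using assms(1) \<open>j \<in> {..<d}\<close> by simp
  have e: "-(G + ew i) = -((G - wdeg d ew (b j)) + (wdeg d ew (b j) + ew i))" by simp
  show "fls_nth (c j * b j i) (-(G + ew i))
          = fls_nth (c j) (wdeg d ew (b j) - G) * lead_vec ew (b j) (wdeg d ew (b j)) i"
    unfolding e fls_nth_mult_deg_le[OF dc db] by (simp add: lead_vec_def)
qed simp

text \<open>In a reduced basis the leading terms of a combination cannot cancel, so the weighted
  degree of \<Sum> c_j b_j bounds each deg c_j + wdeg b_j.\<close>
lemma reduced_coeff_deg_le:
  fixes b :: "nat \<Rightarrow> nat \<Rightarrow> 'a::field fls"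
  assumes red: "reduced d ew b"
    and comb: "wdeg_le d ew (\<lambda>i. \<Sum>j<d. c j * b j i) D"
    and "j0 < d"
  shows "deg_le (c j0) (D - wdeg d ew (b j0))"
proof (rule ccontr)
  assume nd: "\<not> deg_le (c j0) (D - wdeg d ew (b j0))"
  let ?top = "\<lambda>j. - fls_subdegree (c j) + wdeg d ew (b j)"
  let ?J = "{j. j < d \<and> c j \<noteq> 0}"
  have "j0 \<in> ?J" using nd \<open>j0 < d\<close> by auto
  define G where "G = Max (?top ` ?J)"
  obtain jm where jm: "jm < d" "c jm \<noteq> 0" "G = ?top jm"
  proof -
    have "G \<in> ?top ` ?J" unfolding G_def using \<open>j0 \<in> ?J\<close> by (intro Max_in) auto
    thus ?thesis using that by auto
  qed
  have top_le: "?top j \<le> G" if "j \<in> ?J" for j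
    unfolding G_def using that by (intro Max_ge) auto
  have "D < ?top j0" using nd by (auto simp: deg_le_iff_subdegree)
  hence "D < G" using top_le[OF \<open>j0 \<in> ?J\<close>] by linarith
  have deg_c: "deg_le (c j) (G - wdeg d ew (b j))" if "j < d" for j
  proof (cases "c j = 0")
    case False
    with top_le[of j] that show ?thesis by (simp add: deg_le_iff_subdegree)
  qed simp
  have "\<forall>i<d. (\<Sum>j<d. fls_nth (c j) (wdeg d ew (b j) - G) * lead_vec ew (b j) (wdeg d ew (b j)) i) = 0"
  proof (intro allI impI)
    fix i assume "i < d"
    have "deg_le (\<Sum>j<d. c j * b j i) (D + ew i)" using comb \<open>i < d\<close> by (simp add: wdeg_le_def)
    hence "fls_nth (\<Sum>j<d. c j * b j i) (-(G + ew i)) = 0"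
      using \<open>D < G\<close> by (simp add: deg_le_def)
    thus "(\<Sum>j<d. fls_nth (c j) (wdeg d ew (b j) - G) * lead_vec ew (b j) (wdeg d ew (b j)) i) = 0"
      using lincomb_coeff_top[of d c G ew b i, OF deg_c \<open>i < d\<close>] by simp
  qed
  from red[unfolded reduced_def, THEN conjunct2, rule_format, OF this[rule_format] jm(1)]
  have "fls_nth (c jm) (wdeg d ew (b jm) - G) = 0" by simp
  hence "fls_nth (c jm) (fls_subdegree (c jm)) = 0" using jm(3) by simp
  thus False using jm(2) by (simp add: nth_fls_subdegree_nonzero)
qed

section \<open>Polynomial bases and their reduction\<close>

definition mat_vec ::
    "nat \<Rightarrow> (nat \<Rightarrow> nat \<Rightarrow> 'a::comm_semiring_1) \<Rightarrow> (nat \<Rightarrow> 'a) \<Rightarrow> nat \<Rightarrow> 'a" where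
  "mat_vec d M v i = (\<Sum>k<d. M i k * v k)"

lemma mat_vec_lincomb:
  "mat_vec d M (\<lambda>r. \<Sum>l<d. a l * q l r) i = (\<Sum>l<d. a l * mat_vec d M (q l) i)"
proof -
  have "mat_vec d M (\<lambda>r. \<Sum>l<d. a l * q l r) i = (\<Sum>k<d. \<Sum>l<d. M i k * (a l * q l k))"
    by (simp add: mat_vec_def sum_distrib_left)
  also have "\<dots> = (\<Sum>l<d. \<Sum>k<d. a l * (M i k * q l k))"
    by (subst sum.swap) (simp add: algebra_simps)
  also have "\<dots> = (\<Sum>l<d. a l * mat_vec d M (q l) i)"
    by (simp add: mat_vec_def sum_distrib_left)
  finally show ?thesis .
qed

definition poly_basis :: "nat \<Rightarrow> (nat \<Rightarrow> nat \<Rightarrow> 'a::field fls) \<Rightarrow> bool" where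
  "poly_basis d q \<longleftrightarrow> (\<forall>j<d. \<forall>r<d. is_poly (q j r)) \<and>
     (\<forall>i<d. \<exists>c. (\<forall>j<d. is_poly (c j)) \<and> (\<forall>r<d. (\<Sum>j<d. c j * q j r) = (if r = i then 1 else 0))) \<and>
     (\<forall>c. (\<forall>r<d. (\<Sum>j<d. c j * q j r) = 0) \<longrightarrow> (\<forall>j<d. c j = 0))"

definition wdeg_lower_bound ::
    "nat \<Rightarrow> (nat \<Rightarrow> int) \<Rightarrow> (nat \<Rightarrow> nat \<Rightarrow> 'a::field fls) \<Rightarrow> int \<Rightarrow> bool" where
  "wdeg_lower_bound d ew M E \<longleftrightarrow>
    (\<forall>v D. (\<forall>r<d. is_poly (v r)) \<longrightarrow> nonzero_vec d v \<longrightarrow>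
       wdeg_le d ew (mat_vec d M v) D \<longrightarrow> -E \<le> D)"

lemma poly_basis_unit: "poly_basis d (\<lambda>j r. if r = j then 1 else 0)"
proof -
  have unit: "(\<Sum>j<d. c j * (if r = j then 1 else 0)) = (if r < d then c r else 0)"
    for c :: "nat \<Rightarrow> 'a fls" and r
    by (simp add: if_distrib cong: if_cong)
  have "\<exists>c. (\<forall>j<d. is_poly (c j)) \<and>
          (\<forall>r<d. (\<Sum>j<d. c j * (if r = j then 1 else 0)) = (if r = i then (1::'a fls) else 0))" for i
    by (rule exI[of _ "\<lambda>j. if j = i then 1 else 0"]) (auto simp: unit is_poly_def)
  thus ?thesis unfolding poly_basis_def using unit by (auto simp: is_poly_def)
qed

lemma sum_unit_mult:
  assumes "j < (d::nat)"
  shows "(\<Sum>l<d. (if l = j then 1 else 0) * f l) = (f j :: 'b::semiring_1)"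
proof -
  have "(\<Sum>l<d. (if l = j then 1 else 0) * f l) = (\<Sum>l<d. if l = j then f j else 0)"
    by (rule sum.cong) auto
  also have "\<dots> = f j" using assms by simp
  finally show ?thesis .
qed

lemma lincomb_update:
  fixes q :: "nat \<Rightarrow> nat \<Rightarrow> 'a::comm_ring_1" and a c :: "nat \<Rightarrow> 'a"
  assumes "js < d"
  shows "(\<Sum>j<d. c j * (q(js := (\<lambda>r. \<Sum>l<d. a l * q l r))) j r)
           = (\<Sum>l<d. (c l + c js * a l - (if l = js then c js else 0)) * q l r)"
proof -
  have split: "(\<Sum>j<d. f j) = f js + (\<Sum>j\<in>{..<d} - {js}. f j)" for f :: "nat \<Rightarrow> 'a"
    using assms by (intro sum.remove) auto
  have "(\<Sum>j<d. c j * (q(js := (\<lambda>r. \<Sum>l<d. a l * q l r))) j r)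
          = c js * (\<Sum>l<d. a l * q l r) + (\<Sum>j\<in>{..<d} - {js}. c j * q j r)"
    by (subst split) simp
  also have "\<dots> = (\<Sum>l<d. c l * q l r) + (\<Sum>l<d. (c js * a l) * q l r) - c js * q js r"
    by (subst (2) split) (simp add: sum_distrib_left mult.assoc)
  also have "\<dots> = (\<Sum>l<d. c l * q l r + c js * a l * q l r - (if l = js then c js * q js r else 0))"
    using assms by (simp add: sum.distrib sum_subtractf mult.assoc)
  also have "\<dots> = (\<Sum>l<d. (c l + c js * a l - (if l = js then c js else 0)) * q l r)"
    by (rule sum.cong) (auto simp: algebra_simps)
  finally show ?thesis .
qed

lemma poly_basis_indep:
  assumes "poly_basis d q" "\<forall>r<d. (\<Sum>j<d. c j * q j r) = 0"
  shows "\<forall>j<d. c j = 0"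
proof -
  have "\<forall>c. (\<forall>r<d. (\<Sum>j<d. c j * q j r) = 0) \<longrightarrow> (\<forall>j<d. c j = 0)"
    using assms(1) unfolding poly_basis_def by (elim conjE)
  from this[THEN spec[where x = c]] assms(2) show ?thesis by (rule mp)
qed

text \<open>Replacing q_js by \<Sum> a_l q_l, where a_js is a nonzero constant, is an elementary operation
  that is invertible over F[X].\<close>
lemma poly_basis_update:
  fixes q :: "nat \<Rightarrow> nat \<Rightarrow> 'a::field fls"
  assumes basis: "poly_basis d q" and js: "js < d" and ajs: "a js = fls_const \<alpha>" "\<alpha> \<noteq> 0"
    and ap: "\<forall>l<d. is_poly (a l)"
  shows "poly_basis d (q(js := (\<lambda>r. \<Sum>l<d. a l * q l r)))"
proof -
  let ?q' = "q(js := (\<lambda>r. \<Sum>l<d. a l * q l r))"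
  let ?T = "\<lambda>c l. c l + c js * a l - (if l = js then c js else 0)"
  have poly: "\<forall>j<d. \<forall>r<d. is_poly (?q' j r)"
    using basis ap by (auto simp: poly_basis_def intro!: is_poly_sum is_poly_mult)
  have span: "\<forall>i<d. \<exists>c. (\<forall>j<d. is_poly (c j)) \<and> (\<forall>r<d. (\<Sum>j<d. c j * ?q' j r) = (if r = i then 1 else 0))"
  proof (intro allI impI)
    fix i assume i: "i < d"
    obtain c where cp: "\<forall>j<d. is_poly (c j)" and cs: "\<forall>r<d. (\<Sum>j<d. c j * q j r) = (if r = i then 1 else 0)"
      using basis i unfolding poly_basis_def by blast
    define c' where
      "c' l = (if l = js then c js * fls_const (inverse \<alpha>) else c l - c js * fls_const (inverse \<alpha>) * a l)"
      for l
    have T: "?T c' l = c l" for l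
    proof (cases "l = js")
      case True
      have "c js * fls_const (inverse \<alpha>) * fls_const \<alpha> = c js"
        using ajs by (simp add: mult.assoc fls_const_mult_const[symmetric])
      thus ?thesis using True ajs by (simp add: c'_def)
    qed (simp add: c'_def)
    have c'_poly: "\<forall>j<d. is_poly (c' j)"
      using cp ap js by (auto simp: c'_def intro!: is_poly_mult is_poly_diff is_poly_const)
    have c'_span: "\<forall>r<d. (\<Sum>j<d. c' j * ?q' j r) = (if r = i then 1 else 0)"
    proof (intro allI impI)
      fix r assume r: "r < d"
      have eq: "(\<Sum>j<d. c' j * ?q' j r) = (\<Sum>l<d. ?T c' l * q l r)" by (rule lincomb_update[OF js])
      show "(\<Sum>j<d. c' j * ?q' j r) = (if r = i then 1 else 0)" unfolding eq T using cs r by simp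
    qed
    show "\<exists>c. (\<forall>j<d. is_poly (c j)) \<and> (\<forall>r<d. (\<Sum>j<d. c j * ?q' j r) = (if r = i then 1 else 0))"
      by (rule exI[where x=c'], rule conjI[OF c'_poly c'_span])
  qed
  have indep: "\<forall>c. (\<forall>r<d. (\<Sum>j<d. c j * ?q' j r) = 0) \<longrightarrow> (\<forall>j<d. c j = 0)"
  proof (intro allI impI)
    fix c :: "nat \<Rightarrow> 'a fls" and j assume h: "\<forall>r<d. (\<Sum>j<d. c j * ?q' j r) = 0" and j: "j < d"
    have "\<forall>r<d. (\<Sum>l<d. ?T c l * q l r) = 0"
    proof (intro allI impI)
      fix r assume r: "r < d"
      have eq: "(\<Sum>j<d. c j * ?q' j r) = (\<Sum>l<d. ?T c l * q l r)" by (rule lincomb_update[OF js])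
      show "(\<Sum>l<d. ?T c l * q l r) = 0" using h r unfolding eq[symmetric] by blast
    qed
    hence T0: "\<forall>l<d. ?T c l = 0" by (rule poly_basis_indep[OF basis])
    have "c js * fls_const \<alpha> = 0" using T0[rule_format, OF js] ajs by simp
    hence cjs: "c js = 0" using ajs by simp
    show "c j = 0" using T0[rule_format, OF j] cjs by simp
  qed
  show ?thesis unfolding poly_basis_def by (intro conjI poly span indep)
qed

lemma poly_basis_nonzero:
  assumes "poly_basis d q" "j < d"
  shows "nonzero_vec d (q j)"
proof (rule ccontr)
  let ?\<delta> = "\<lambda>l. if l = j then 1 else (0::'a fls)"
  assume "\<not> nonzero_vec d (q j)"
  hence "\<forall>r<d. (\<Sum>l<d. ?\<delta> l * q l r) = 0"
    using assms(2) by (auto simp: nonzero_vec_def sum_unit_mult)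
  hence "\<forall>l<d. ?\<delta> l = 0" by (rule poly_basis_indep[OF assms(1)])
  thus False using assms(2) by auto
qed

lemma poly_basis_image_nonzero:
  assumes "poly_basis d q" "j < d" "wdeg_lower_bound d ew M E"
  shows "nonzero_vec d (mat_vec d M (q j))"
proof (rule ccontr)
  assume "\<not> nonzero_vec d (mat_vec d M (q j))"
  hence "wdeg_le d ew (mat_vec d M (q j)) (- E - 1)"
    by (auto simp: nonzero_vec_def wdeg_le_def)
  moreover have "\<forall>r<d. is_poly (q j r)" using assms(1,2) by (simp add: poly_basis_def)
  ultimately have "- E \<le> - E - 1"
    using assms(3)[unfolded wdeg_lower_bound_def, rule_format] poly_basis_nonzero[OF assms(1,2)]
    by blast
  thus False by simp
qed

lemma poly_basis_wdeg_lower: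
  assumes "poly_basis d q" "j < d" "wdeg_lower_bound d ew M E"
  shows "- E \<le> wdeg d ew (mat_vec d M (q j))"
proof -
  have "\<forall>r<d. is_poly (q j r)" using assms(1,2) by (simp add: poly_basis_def)
  from assms(3)[unfolded wdeg_lower_bound_def, rule_format, OF this[rule_format]
      poly_basis_nonzero[OF assms(1,2)] wdeg_le_wdeg]
  show ?thesis .
qed

text \<open>If the leading coefficient vectors satisfy a nontrivial relation \<alpha>, shifting each b_l
  by X^(\<mu> - wdeg b_l), where \<mu> is the largest weighted degree involved, makes the leading terms
  cancel in \<Sum> \<alpha>_l X^(\<mu> - wdeg b_l) b_l.\<close>
lemma lead_relation_wdeg_decrease:
  fixes b :: "nat \<Rightarrow> nat \<Rightarrow> 'a::field fls"
  assumes rel: "\<forall>i<d. (\<Sum>l<d. \<alpha> l * lead_vec ew (b l) (wdeg d ew (b l)) i) = 0"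
    and top: "\<And>l. l < d \<Longrightarrow> \<alpha> l \<noteq> 0 \<Longrightarrow> wdeg d ew (b l) \<le> \<mu>"
  defines "a \<equiv> \<lambda>l. fls_const (\<alpha> l) * fls_X_inv ^ nat (\<mu> - wdeg d ew (b l))"
  shows "wdeg_le d ew (\<lambda>i. \<Sum>l<d. a l * b l i) (\<mu> - 1)"
proof (rule wdeg_le_decrease)
  have summand: "deg_le (a l * b l i) (\<mu> + ew i) \<and>
      fls_nth (a l * b l i) (-(\<mu> + ew i)) = \<alpha> l * lead_vec ew (b l) (wdeg d ew (b l)) i"
    if "l < d" "i < d" for l i
  proof (cases "\<alpha> l = 0")
    case False
    have e: "\<mu> + ew i = int (nat (\<mu> - wdeg d ew (b l))) + (wdeg d ew (b l) + ew i)"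
      using top[OF that(1) False] by simp
    have da: "deg_le (a l) (int (nat (\<mu> - wdeg d ew (b l))))"
      unfolding a_def by (rule deg_le_monom)
    have db: "deg_le (b l i) (wdeg d ew (b l) + ew i)"
      using wdeg_le_wdeg[of d ew "b l"] that(2) by (simp add: wdeg_le_def)
    show ?thesis
      unfolding e using deg_le_mult[OF da db] fls_nth_mult_deg_le[OF da db]
      by (simp add: a_def lead_vec_def)
  qed (simp add: a_def)
  show "wdeg_le d ew (\<lambda>i. \<Sum>l<d. a l * b l i) \<mu>"
    unfolding wdeg_le_def using summand by (auto intro!: deg_le_sum)
  show "\<forall>i<d. lead_vec ew (\<lambda>i. \<Sum>l<d. a l * b l i) \<mu> i = 0"
  proof (intro allI impI)
    fix i assume "i < d"
    have "lead_vec ew (\<lambda>i. \<Sum>l<d. a l * b l i) \<mu> i = (\<Sum>l<d. fls_nth (a l * b l i) (-(\<mu> + ew i)))"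
      by (simp add: lead_vec_def fls_nth_sum)
    also have "\<dots> = (\<Sum>l<d. \<alpha> l * lead_vec ew (b l) (wdeg d ew (b l)) i)"
      by (rule sum.cong) (use summand \<open>i < d\<close> in auto)
    also have "\<dots> = 0" using rel \<open>i < d\<close> by simp
    finally show "lead_vec ew (\<lambda>i. \<Sum>l<d. a l * b l i) \<mu> i = 0" .
  qed
qed

lemma reduction_step:
  fixes q :: "nat \<Rightarrow> nat \<Rightarrow> 'a::field fls"
  assumes basis: "poly_basis d q" and lower: "wdeg_lower_bound d ew M E"
    and not_red: "\<not> reduced d ew (\<lambda>j. mat_vec d M (q j))"
  obtains q' where "poly_basis d q'"
    "(\<Sum>j<d. nat (wdeg d ew (mat_vec d M (q' j)) + E)) < (\<Sum>j<d. nat (wdeg d ew (mat_vec d M (q j)) + E))"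
proof -
  define \<mu> where "\<mu> j = wdeg d ew (mat_vec d M (q j))" for j
  obtain \<alpha> :: "nat \<Rightarrow> 'a" where
    rel: "\<forall>i<d. (\<Sum>j<d. \<alpha> j * lead_vec ew (mat_vec d M (q j)) (\<mu> j) i) = 0"
    and "\<exists>j<d. \<alpha> j \<noteq> 0"
    using not_red poly_basis_image_nonzero[OF basis _ lower] unfolding reduced_def \<mu>_def by auto
  define J where "J = {j. j < d \<and> \<alpha> j \<noteq> 0}"
  have "J \<noteq> {}" "finite J" using \<open>\<exists>j<d. \<alpha> j \<noteq> 0\<close> by (auto simp: J_def)
  hence "Max (\<mu> ` J) \<in> \<mu> ` J" by (intro Max_in) auto
  then obtain js where js: "js \<in> J" "\<mu> js = Max (\<mu> ` J)" by (metis imageE)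
  have top: "\<mu> l \<le> \<mu> js" if "l < d" "\<alpha> l \<noteq> 0" for l
    using js \<open>finite J\<close> that by (auto simp: J_def)
  have "js < d" "\<alpha> js \<noteq> 0" using js(1) by (auto simp: J_def)
  define a where "a l = fls_const (\<alpha> l) * fls_X_inv ^ nat (\<mu> js - \<mu> l)" for l
  define q' where "q' = q(js := (\<lambda>r. \<Sum>l<d. a l * q l r))"
  have basis': "poly_basis d q'"
    unfolding q'_def using basis \<open>js < d\<close> \<open>\<alpha> js \<noteq> 0\<close>
    by (intro poly_basis_update[where \<alpha> = "\<alpha> js"]) (auto simp: a_def is_poly_monom)
  have "wdeg_le d ew (\<lambda>i. \<Sum>l<d. a l * mat_vec d M (q l) i) (\<mu> js - 1)"
    unfolding a_def \<mu>_def using rel top unfolding \<mu>_def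
    by (intro lead_relation_wdeg_decrease) auto
  moreover have "mat_vec d M (q' js) = (\<lambda>i. \<Sum>l<d. a l * mat_vec d M (q l) i)"
    by (simp add: q'_def mat_vec_lincomb fun_eq_iff)
  ultimately have "wdeg d ew (mat_vec d M (q' js)) \<le> \<mu> js - 1"
    using poly_basis_image_nonzero[OF basis' \<open>js < d\<close> lower] by (intro wdeg_least) auto
  moreover have "- E \<le> wdeg d ew (mat_vec d M (q' js))" "- E \<le> \<mu> js"
    using poly_basis_wdeg_lower[OF basis' \<open>js < d\<close> lower]
      poly_basis_wdeg_lower[OF basis \<open>js < d\<close> lower] by (auto simp: \<mu>_def)
  ultimately have "(\<Sum>j<d. nat (wdeg d ew (mat_vec d M (q' j)) + E)) < (\<Sum>j<d. nat (\<mu> j + E))"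
    using \<open>js < d\<close> by (intro sum_strict_mono_ex1) (auto simp: q'_def \<mu>_def)
  thus ?thesis using that basis' by (simp add: \<mu>_def)
qed

lemma reduced_poly_basis_exists:
  assumes "wdeg_lower_bound d ew M E"
  obtains q where "poly_basis d q" "reduced d ew (\<lambda>j. mat_vec d M (q j))"
proof -
  define f where "f q = (\<Sum>j<d. nat (wdeg d ew (mat_vec d M (q j)) + E))"
    for q :: "nat \<Rightarrow> nat \<Rightarrow> 'a fls"
  have "poly_basis d q0 \<longrightarrow> (\<exists>q. poly_basis d q \<and> reduced d ew (\<lambda>j. mat_vec d M (q j)))"
    for q0 :: "nat \<Rightarrow> nat \<Rightarrow> 'a fls"
  proof (induction q0 rule: measure_induct_rule[of f])
    case (less q)
    show ?case
    proof
      assume basis: "poly_basis d q"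
      show "\<exists>q. poly_basis d q \<and> reduced d ew (\<lambda>j. mat_vec d M (q j))"
      proof (cases "reduced d ew (\<lambda>j. mat_vec d M (q j))")
        case False
        then obtain q' where "poly_basis d q'" "f q' < f q"
          using reduction_step[OF basis assms] unfolding f_def by blast
        thus ?thesis using less.IH by blast
      qed (use basis in blast)
    qed
  qed
  thus ?thesis using poly_basis_unit that by blast
qed

section \<open>Determinants, the volume bound and counting small minima\<close>

lemma poly_basis_inverse:
  assumes "poly_basis d q"
  obtains cf where "\<And>i j. i < d \<Longrightarrow> j < d \<Longrightarrow> is_poly (cf i j)"
    and "\<And>i r. i < d \<Longrightarrow> r < d \<Longrightarrow> (\<Sum>j<d. cf i j * q j r) = (if r = i then 1 else 0)"
proof -
  have "\<forall>i\<in>{..<d}. \<exists>c. (\<forall>j<d. is_poly (c j)) \<and> (\<forall>r<d. (\<Sum>j<d. c j * q j r) = (if r = i then 1 else 0))"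
    using assms unfolding poly_basis_def by simp
  from bchoice[OF this] obtain cf where
    cf: "\<forall>i\<in>{..<d}. (\<forall>j<d. is_poly (cf i j)) \<and> (\<forall>r<d. (\<Sum>j<d. cf i j * q j r) = (if r = i then 1 else 0))"
    by (elim exE)
  show ?thesis by (rule that[of cf]) (use cf in auto)
qed

lemma right_inverse_expand:
  fixes cf q :: "nat \<Rightarrow> nat \<Rightarrow> 'a::comm_ring_1"
  assumes right: "\<And>i r. i < d \<Longrightarrow> r < d \<Longrightarrow> (\<Sum>j<d. cf i j * q j r) = (if r = i then 1 else 0)"
    and "r < d"
  shows "z r = (\<Sum>j<d. (\<Sum>i<d. z i * cf i j) * q j r)"
proof -
  have "(\<Sum>j<d. (\<Sum>i<d. z i * cf i j) * q j r) = (\<Sum>j<d. \<Sum>i<d. z i * (cf i j * q j r))"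
    by (simp add: sum_distrib_right mult.assoc)
  also have "\<dots> = (\<Sum>i<d. z i * (\<Sum>j<d. cf i j * q j r))"
    by (subst sum.swap) (simp add: sum_distrib_left)
  also have "\<dots> = (\<Sum>i<d. if i = r then z r else 0)"
    by (rule sum.cong) (use right \<open>r < d\<close> in auto)
  finally show ?thesis using \<open>r < d\<close> by simp
qed

lemma mat_vec_right_inverse_expand:
  fixes cf q M :: "nat \<Rightarrow> nat \<Rightarrow> 'a::field fls"
  assumes right: "\<And>i r. i < d \<Longrightarrow> r < d \<Longrightarrow> (\<Sum>j<d. cf i j * q j r) = (if r = i then 1 else 0)"
  shows "mat_vec d M z i = (\<Sum>j<d. (\<Sum>k<d. z k * cf k j) * mat_vec d M (q j) i)"
proof -
  have "mat_vec d M z i = mat_vec d M (\<lambda>r. \<Sum>j<d. (\<Sum>k<d. z k * cf k j) * q j r) i"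
    unfolding mat_vec_def by (rule sum.cong) (simp_all add: right_inverse_expand[OF right, symmetric])
  thus ?thesis by (simp only: mat_vec_lincomb)
qed

lemma poly_basis_left_inverse:
  fixes cf q :: "nat \<Rightarrow> nat \<Rightarrow> 'a::field fls"
  assumes basis: "poly_basis d q"
    and right: "\<And>i r. i < d \<Longrightarrow> r < d \<Longrightarrow> (\<Sum>j<d. cf i j * q j r) = (if r = i then 1 else 0)"
    and "j < d" "l < d"
  shows "(\<Sum>r<d. cf r l * q j r) = (if j = l then 1 else 0)"
proof -
  define c where "c l = (\<Sum>i<d. q j i * cf i l) - (if l = j then 1 else 0)" for l
  have "(\<Sum>l<d. c l * q l r) = 0" if "r < d" for r
  proof -
    have "(\<Sum>l<d. c l * q l r)
        = (\<Sum>l<d. (\<Sum>i<d. q j i * cf i l) * q l r) - (\<Sum>l<d. (if l = j then 1 else 0) * q l r)"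
      by (simp add: c_def left_diff_distrib sum_subtractf)
    also have "\<dots> = q j r - q j r"
      by (simp only: right_inverse_expand[OF right that, of "q j", symmetric]
          sum_unit_mult[OF \<open>j < d\<close>, of "\<lambda>l. q l r"])
    finally show ?thesis by simp
  qed
  hence "\<forall>r<d. (\<Sum>l<d. c l * q l r) = 0" by blast
  hence "\<forall>l<d. c l = 0" by (rule poly_basis_indep[OF basis])
  thus ?thesis using \<open>l < d\<close> by (simp add: c_def mult.commute)
qed

lemma is_poly_det:
  fixes A :: "'a::field fls mat"
  assumes "A \<in> carrier_mat n n" "\<And>i j. i < n \<Longrightarrow> j < n \<Longrightarrow> is_poly (A $$ (i, j))"
  shows "is_poly (det A)"
  unfolding det_def'[OF assms(1)]
proof (rule is_poly_sum)
  fix p assume "p \<in> {p. p permutes {0..<n}}"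
  hence "is_poly (\<Prod>i = 0..<n. A $$ (i, p i))"
    using assms(2) by (intro is_poly_prod) (auto simp: permutes_in_image)
  thus "is_poly (signof p * (\<Prod>i = 0..<n. A $$ (i, p i)))"
    by (intro is_poly_mult is_poly_of_int)
qed

lemma deg_le_det:
  fixes B :: "'a::field fls mat"
  assumes "B \<in> carrier_mat d d" "\<And>i j. i < d \<Longrightarrow> j < d \<Longrightarrow> deg_le (B $$ (i, j)) (c j + r i)"
  shows "deg_le (det B) ((\<Sum>j<d. c j) + (\<Sum>i<d. r i))"
  unfolding det_def'[OF assms(1)]
proof (rule deg_le_sum)
  fix p assume "p \<in> {p. p permutes {0..<d}}"
  hence p: "p permutes {0..<d}" by simp
  have "deg_le (\<Prod>i = 0..<d. B $$ (i, p i)) (\<Sum>i = 0..<d. c (p i) + r i)"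
    using assms(2) p by (intro deg_le_prod) (auto simp: permutes_in_image)
  moreover have "(\<Sum>i = 0..<d. c (p i) + r i) = (\<Sum>j<d. c j) + (\<Sum>i<d. r i)"
    using sum.permute[OF p, of c] by (simp add: comp_def sum.distrib atLeast0LessThan)
  ultimately have "deg_le (of_int (signof p) * (\<Prod>i = 0..<d. B $$ (i, p i))) (0 + ((\<Sum>j<d. c j) + (\<Sum>i<d. r i)))"
    by (intro deg_le_mult) (auto simp: fls_of_int deg_le_def)
  thus "deg_le (signof p * (\<Prod>i = 0..<d. B $$ (i, p i))) ((\<Sum>j<d. c j) + (\<Sum>i<d. r i))"
    by simp
qed

text \<open>The determinant of a polynomial basis is a unit of F[X], i.e. a nonzero constant.\<close>
lemma poly_basis_det:
  assumes "poly_basis d q"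
  shows "det (mat d d (\<lambda>(r, j). q j r)) \<noteq> 0" "fls_subdegree (det (mat d d (\<lambda>(r, j). q j r))) = 0"
proof -
  obtain cf where cf_poly: "\<And>i j. i < d \<Longrightarrow> j < d \<Longrightarrow> is_poly (cf i j)"
    and right: "\<And>i r. i < d \<Longrightarrow> r < d \<Longrightarrow> (\<Sum>j<d. cf i j * q j r) = (if r = i then 1 else 0)"
    using poly_basis_inverse[OF assms] by blast
  define Q where "Q = mat d d (\<lambda>(r, j). q j r)"
  define C where "C = mat d d (\<lambda>(j, i). cf i j)"
  have QC: "Q \<in> carrier_mat d d" "C \<in> carrier_mat d d" by (auto simp: Q_def C_def)
  have "Q * C = 1\<^sub>m d"
  proof (rule eq_matI)
    fix r i assume "r < dim_row (1\<^sub>m d :: 'a fls mat)" "i < dim_col (1\<^sub>m d :: 'a fls mat)"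
    hence "r < d" "i < d" by auto
    thus "(Q * C) $$ (r, i) = 1\<^sub>m d $$ (r, i)"
      using right[of i r] by (simp add: Q_def C_def scalar_prod_def atLeast0LessThan mult.commute)
  qed (auto simp: Q_def C_def)
  hence unit: "det Q * det C = 1" using det_mult[OF QC] by simp
  hence nz: "det Q \<noteq> 0" "det C \<noteq> 0" by auto
  have "fls_subdegree (det Q) + fls_subdegree (det C) = 0"
    using unit nz by (metis fls_one_subdegree fls_subdegree_mult)
  moreover have "is_poly (det Q)" "is_poly (det C)"
    using assms cf_poly by (auto intro!: is_poly_det simp: Q_def C_def poly_basis_def)
  ultimately have "fls_subdegree (det Q) = 0"
    using nz is_poly_subdegree_le[of "det Q"] is_poly_subdegree_le[of "det C"] by auto
  with nz show "det (mat d d (\<lambda>(r, j). q j r)) \<noteq> 0" "fls_subdegree (det (mat d d (\<lambda>(r, j). q j r))) = 0"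
    by (simp_all add: Q_def)
qed

text \<open>The function field analogue of Minkowski's second theorem (one inequality): the weighted
  degrees of a basis of a lattice of determinant 1 add up to at least -\<Sum> ew i.\<close>
lemma poly_basis_wdeg_sum_ge:
  fixes q M :: "nat \<Rightarrow> nat \<Rightarrow> 'a::field fls"
  assumes basis: "poly_basis d q" and det_M: "det (mat d d (\<lambda>(i, k). M i k)) = 1"
  shows "0 \<le> (\<Sum>j<d. wdeg d ew (mat_vec d M (q j))) + (\<Sum>i<d. ew i)"
proof -
  define Q where "Q = mat d d (\<lambda>(r, j). q j r)"
  define B where "B = mat d d (\<lambda>(i, k). M i k) * Q"
  have B: "B \<in> carrier_mat d d" unfolding B_def Q_def by (rule mult_carrier_mat) auto
  have "det B = det Q"
    using det_mult[of "mat d d (\<lambda>(i, k). M i k)" d Q] det_M by (simp add: B_def Q_def)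
  hence "fls_nth (det B) 0 \<noteq> 0"
    using poly_basis_det[OF basis] by (metis Q_def nth_fls_subdegree_nonzero)
  moreover have "deg_le (det B) ((\<Sum>j<d. wdeg d ew (mat_vec d M (q j))) + (\<Sum>i<d. ew i))"
  proof (rule deg_le_det[OF B])
    fix i j assume "i < d" "j < d"
    moreover have "wdeg_le d ew (mat_vec d M (q j)) (wdeg d ew (mat_vec d M (q j)))"
      by (rule wdeg_le_wdeg)
    ultimately show "deg_le (B $$ (i, j)) (wdeg d ew (mat_vec d M (q j)) + ew i)"
      by (simp add: B_def Q_def wdeg_le_def scalar_prod_def mat_vec_def atLeast0LessThan)
  qed
  ultimately have "\<not> 0 < - ((\<Sum>j<d. wdeg d ew (mat_vec d M (q j))) + (\<Sum>i<d. ew i))"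
    by (auto simp: deg_le_def)
  thus ?thesis by linarith
qed

lemma sum_apply: "(\<Sum>j\<in>S. f j) x = (\<Sum>j\<in>S. (f j x :: 'c::comm_monoid_add))"
  by (induction S rule: infinite_finite_induct) auto

lemma lin_indep_card_le_span:
  fixes w q :: "nat \<Rightarrow> nat \<Rightarrow> 'b::field"
  assumes indep: "lin_indep d t w" and "finite S"
    and span: "\<And>s r. s < t \<Longrightarrow> r < d \<Longrightarrow> w s r = (\<Sum>j\<in>S. c s j * q j r)"
  shows "t \<le> card S"
proof -
  interpret vs: vector_space "\<lambda>(a::'b) (v::nat \<Rightarrow> 'b). (\<lambda>i. a * v i)"
    by unfold_locales (auto simp: fun_eq_iff algebra_simps)
  define wr where "wr s = (\<lambda>r. if r < d then w s r else 0)" for s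
  define qr where "qr j = (\<lambda>r. if r < d then q j r else 0)" for j
  have indep': "\<forall>s<t. a s = 0" if "\<forall>r. (\<Sum>s<t. a s * wr s r) = 0" for a
  proof -
    have "\<forall>j<d. (\<Sum>s<t. a s * w s j) = 0"
    proof (intro allI impI)
      fix j assume "j < d"
      thus "(\<Sum>s<t. a s * w s j) = 0" using that[rule_format, of j] by (simp add: wr_def)
    qed
    thus ?thesis using indep unfolding lin_indep_def by blast
  qed
  have inj: "inj_on wr {..<t}"
  proof (rule inj_onI, rule ccontr)
    fix s1 s2 assume s: "s1 \<in> {..<t}" "s2 \<in> {..<t}" "wr s1 = wr s2" "s1 \<noteq> s2"
    define a where "a s = (if s = s1 then 1 else if s = s2 then -1 else (0::'b))" for s
    have "(\<Sum>s<t. a s * wr s r) = 0" for r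
    proof -
      have "(\<Sum>s<t. a s * wr s r)
          = (\<Sum>s<t. (if s = s1 then wr s1 r else 0) + (if s = s2 then - wr s2 r else 0))"
        by (rule sum.cong) (use s(4) in \<open>auto simp: a_def\<close>)
      also have "\<dots> = wr s1 r - wr s2 r" using s(1,2) by (simp add: sum.distrib)
      finally show ?thesis using s(3) by simp
    qed
    hence "a s1 = 0" using indep'[of a] s(1) by blast
    thus False by (simp add: a_def)
  qed
  have "vs.independent (wr ` {..<t})"
  proof (rule vs.independent_if_scalars_zero)
    fix f x assume h: "(\<Sum>x\<in>wr ` {..<t}. (\<lambda>i. f x * x i)) = 0" and x: "x \<in> wr ` {..<t}"
    have "\<forall>r. (\<Sum>s<t. f (wr s) * wr s r) = 0"
      using h by (simp add: sum.reindex[OF inj] fun_eq_iff sum_apply)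
    thus "f x = 0" using indep'[of "\<lambda>s. f (wr s)"] x by auto
  qed simp
  moreover have "wr ` {..<t} \<subseteq> vs.span (qr ` S)"
  proof
    fix x assume "x \<in> wr ` {..<t}"
    then obtain s where s: "s < t" "x = wr s" by auto
    have "wr s = (\<Sum>j\<in>S. (\<lambda>i. c s j * qr j i))"
      by (auto simp: fun_eq_iff sum_apply wr_def qr_def span[OF s(1)])
    also have "\<dots> \<in> vs.span (qr ` S)"
      by (intro vs.span_sum vs.span_scale vs.span_base) auto
    finally show "x \<in> vs.span (qr ` S)" using s by simp
  qed
  ultimately have "card (wr ` {..<t}) \<le> card (qr ` S)"
    using vs.independent_span_bound \<open>finite S\<close> by blast
  also have "\<dots> \<le> card S" using \<open>finite S\<close> by (rule card_image_le)
  finally show ?thesis using card_image[OF inj] by simp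
qed

text \<open>Independent lattice points of weighted degree \<le> 0 lie in the span of those vectors of a
  reduced basis that have weighted degree \<le> 0.\<close>
lemma indep_card_le_small_minima:
  fixes q M w :: "nat \<Rightarrow> nat \<Rightarrow> 'a::field fls"
  assumes basis: "poly_basis d q" and red: "reduced d ew (\<lambda>j. mat_vec d M (q j))"
    and w_poly: "\<And>s r. s < t \<Longrightarrow> r < d \<Longrightarrow> is_poly (w s r)"
    and w_small: "\<And>s. s < t \<Longrightarrow> wdeg_le d ew (mat_vec d M (w s)) 0"
    and indep: "lin_indep d t w"
  shows "t \<le> card {j. j < d \<and> wdeg d ew (mat_vec d M (q j)) \<le> 0}"
proof -
  obtain cf where cf_poly: "\<And>i j. i < d \<Longrightarrow> j < d \<Longrightarrow> is_poly (cf i j)"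
    and right: "\<And>i r. i < d \<Longrightarrow> r < d \<Longrightarrow> (\<Sum>j<d. cf i j * q j r) = (if r = i then 1 else 0)"
    using poly_basis_inverse[OF basis] by blast
  define S where "S = {j. j < d \<and> wdeg d ew (mat_vec d M (q j)) \<le> 0}"
  define c where "c s j = (\<Sum>i<d. w s i * cf i j)" for s j
  have c_zero: "c s j = 0" if "s < t" "j < d" "j \<notin> S" for s j
  proof -
    have "mat_vec d M (w s) = (\<lambda>i. \<Sum>j<d. c s j * mat_vec d M (q j) i)"
      unfolding c_def by (intro ext mat_vec_right_inverse_expand[OF right])
    hence "deg_le (c s j) (0 - wdeg d ew (mat_vec d M (q j)))"
      using w_small[OF that(1)] by (intro reduced_coeff_deg_le[OF red _ that(2)]) simp
    moreover have "is_poly (c s j)"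
      using w_poly cf_poly that by (auto simp: c_def intro!: is_poly_sum is_poly_mult)
    ultimately show ?thesis
      using is_poly_deg_le_neg[of "c s j" "- wdeg d ew (mat_vec d M (q j))"] that by (simp add: S_def)
  qed
  have "w s r = (\<Sum>j\<in>S. c s j * q j r)" if "s < t" "r < d" for s r
  proof -
    have "w s r = (\<Sum>j<d. c s j * q j r)"
      unfolding c_def by (rule right_inverse_expand[OF right that(2)])
    also have "\<dots> = (\<Sum>j\<in>S. c s j * q j r)"
      by (rule sum.mono_neutral_right) (use c_zero that in \<open>auto simp: S_def\<close>)
    finally show ?thesis .
  qed
  with lin_indep_card_le_span[OF indep] show ?thesis by (simp add: S_def)
qed

section \<open>The lattice of a matrix and its dual vectors\<close>

lemma sum_lessThan_add_split: "(\<Sum>k<m + n. f k) = (\<Sum>k<m. f k) + (\<Sum>l<n. f (m + l :: nat))"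
  using sum.atLeastLessThan_concat[of 0 m "m + n" f] sum.shift_bounds_nat_ivl[of f 0 m n]
  by (simp add: atLeast0LessThan add.commute)

text \<open>lattice_mat m n A = [[I_m, 0], [A^T, I_n]]: the last n coordinates of its image of a vector
  x are the linear forms x \<cdot> col_l (tilde A).\<close>
definition lattice_mat :: "nat \<Rightarrow> nat \<Rightarrow> (nat \<Rightarrow> nat \<Rightarrow> 'a::field fls) \<Rightarrow> nat \<Rightarrow> nat \<Rightarrow> 'a fls"
  where "lattice_mat m n A i k =
    (if i < m then (if k = i then 1 else 0) else (if k < m then A k (i - m) else (if k = i then 1 else 0)))"

lemma mat_vec_lattice_mat:
  assumes "i < m + n"
  shows "mat_vec (m + n) (lattice_mat m n A) v i = (if i < m then v i else (\<Sum>k<m. A k (i - m) * v k) + v i)"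
proof (cases "i < m")
  case True
  have "mat_vec (m + n) (lattice_mat m n A) v i = (\<Sum>k<m + n. if k = i then v i else 0)"
    unfolding mat_vec_def by (rule sum.cong) (use True in \<open>auto simp: lattice_mat_def\<close>)
  also have "\<dots> = v i" using assms by simp
  finally show ?thesis using True by simp
next
  case False
  have U: "{..<m + n} = {..<m} \<union> {m..<m + n}" by auto
  have "mat_vec (m + n) (lattice_mat m n A) v i = (\<Sum>k<m. lattice_mat m n A i k * v k) + (\<Sum>k\<in>{m..<m + n}. lattice_mat m n A i k * v k)"
    unfolding mat_vec_def U by (rule sum.union_disjoint) auto
  also have "(\<Sum>k<m. lattice_mat m n A i k * v k) = (\<Sum>k<m. A k (i - m) * v k)"
    by (rule sum.cong) (use False in \<open>auto simp: lattice_mat_def\<close>)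
  also have "(\<Sum>k\<in>{m..<m + n}. lattice_mat m n A i k * v k) = (\<Sum>k\<in>{m..<m + n}. if k = i then v i else 0)"
    by (rule sum.cong) (use False in \<open>auto simp: lattice_mat_def\<close>)
  also have "\<dots> = v i" using assms False by simp
  finally show ?thesis using False by simp
qed

lemma det_lattice_mat: "det (mat (m + n) (m + n) (\<lambda>(i, k). lattice_mat m n A i k)) = 1"
proof -
  let ?B = "mat (m + n) (m + n) (\<lambda>(i, k). lattice_mat m n A i k)"
  have "det ?B = prod_list (diag_mat ?B)"
    by (rule det_lower_triangular[of "m + n"]) (auto simp: lattice_mat_def)
  also have "diag_mat ?B = replicate (m + n) 1"
    by (rule nth_equalityI) (auto simp: diag_mat_def lattice_mat_def)
  finally show ?thesis by simp
qed

lemma lattice_mat_wdeg_lower_bound: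
  fixes m n :: nat and e1 e2 :: int and A :: "nat \<Rightarrow> nat \<Rightarrow> 'a::field fls"
  shows "wdeg_lower_bound (m + n) (\<lambda>i. if i < m then e1 else e2) (lattice_mat m n A) (max e1 e2)"
  unfolding wdeg_lower_bound_def
proof (intro allI impI, rule ccontr)
  fix v :: "nat \<Rightarrow> 'a fls" and D
  assume poly: "\<forall>r<m + n. is_poly (v r)" and "nonzero_vec (m + n) v"
    and small: "wdeg_le (m + n) (\<lambda>i. if i < m then e1 else e2) (mat_vec (m + n) (lattice_mat m n A) v) D"
    and "\<not> - max e1 e2 \<le> D"
  hence neg: "D + e1 < 0" "D + e2 < 0" by auto
  have coord: "deg_le (mat_vec (m + n) (lattice_mat m n A) v k) (D + (if k < m then e1 else e2))"
    if "k < m + n" for k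
    using small that by (simp add: wdeg_le_def)
  have first: "v k = 0" if "k < m" for k
  proof -
    have "deg_le (v k) (D + e1)" using coord[of k] that by (simp add: mat_vec_lattice_mat)
    thus ?thesis using poly that neg(1) by (intro is_poly_deg_le_neg[of "v k" "D + e1"]) auto
  qed
  have "v k = 0" if "k < m + n" for k
  proof (cases "k < m")
    case False
    hence "deg_le (v k) (D + e2)"
      using coord[OF that] that first by (simp add: mat_vec_lattice_mat)
    thus ?thesis using poly that neg(2) by (intro is_poly_deg_le_neg[of "v k" "D + e2"]) auto
  qed (rule first)
  thus False using \<open>nonzero_vec (m + n) v\<close> by (auto simp: nonzero_vec_def)
qed

lemma dotp_tildeA:
  assumes "l < n"
  shows "dotp (m + n) x (col (tildeA m n A) l) = (\<Sum>j<m. x j * A j l) + x (m + l)"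
proof -
  have U: "{..<m + n} = {..<m} \<union> {m..<m + n}" by auto
  have "dotp (m + n) x (col (tildeA m n A) l) = (\<Sum>j<m. x j * tildeA m n A j l) + (\<Sum>j\<in>{m..<m + n}. x j * tildeA m n A j l)"
    unfolding dotp_def Defs.col_def U by (rule sum.union_disjoint) auto
  also have "(\<Sum>j<m. x j * tildeA m n A j l) = (\<Sum>j<m. x j * A j l)"
    by (rule sum.cong) (use assms in \<open>auto simp: tildeA_def\<close>)
  also have "(\<Sum>j\<in>{m..<m + n}. x j * tildeA m n A j l) = (\<Sum>j\<in>{m..<m + n}. if j = m + l then x (m + l) else 0)"
    by (rule sum.cong) (use assms in \<open>auto simp: tildeA_def\<close>)
  also have "\<dots> = x (m + l)" using assms by simp
  finally show ?thesis .
qed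

lemma dotp_tildeA_star:
  assumes "l < m"
  shows "dotp (m + n) x (col (tildeA_star m n A) l) = (\<Sum>j<n. x j * A l j) + x (n + l)"
proof -
  have U: "{..<m + n} = {..<n} \<union> {n..<m + n}" by auto
  have "dotp (m + n) x (col (tildeA_star m n A) l) = (\<Sum>j<n. x j * tildeA_star m n A j l) + (\<Sum>j\<in>{n..<m + n}. x j * tildeA_star m n A j l)"
    unfolding dotp_def Defs.col_def U by (rule sum.union_disjoint) auto
  also have "(\<Sum>j<n. x j * tildeA_star m n A j l) = (\<Sum>j<n. x j * A l j)"
    by (rule sum.cong) (use assms in \<open>auto simp: tildeA_star_def\<close>)
  also have "(\<Sum>j\<in>{n..<m + n}. x j * tildeA_star m n A j l) = (\<Sum>j\<in>{n..<m + n}. if j = n + l then x (n + l) else 0)"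
    by (rule sum.cong) (use assms in \<open>auto simp: tildeA_star_def\<close>)
  also have "\<dots> = x (n + l)" using assms by simp
  finally show ?thesis .
qed

text \<open>If the lattice point M z is the unit vector e_i0, then the coordinate of z with respect to
  the basis vector q_jm is \<Sum> z_r cf_(r,jm); its degree is controlled by the reducedness of the
  basis.\<close>
lemma reduced_dual_deg_le:
  fixes q M :: "nat \<Rightarrow> nat \<Rightarrow> 'a::field fls"
  assumes red: "reduced d ew (\<lambda>j. mat_vec d M (q j))"
    and right: "\<And>i r. i < d \<Longrightarrow> r < d \<Longrightarrow> (\<Sum>j<d. cf i j * q j r) = (if r = i then 1 else 0)"
    and "jm < d" "i0 < d"
    and unit: "\<And>i. i < d \<Longrightarrow> mat_vec d M z i = (if i = i0 then 1 else 0)"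
  shows "deg_le (\<Sum>r<d. z r * cf r jm) (- ew i0 - wdeg d ew (mat_vec d M (q jm)))"
proof -
  define c where "c j = (\<Sum>i<d. z i * cf i j)" for j
  have "mat_vec d M z = (\<lambda>i. \<Sum>j<d. c j * mat_vec d M (q j) i)"
    unfolding c_def by (intro ext mat_vec_right_inverse_expand[OF right])
  moreover have "wdeg_le d ew (mat_vec d M z) (- ew i0)"
    using unit by (simp add: wdeg_le_def deg_le_def)
  ultimately have "deg_le (c jm) (- ew i0 - wdeg d ew (mat_vec d M (q jm)))"
    by (intro reduced_coeff_deg_le[OF red _ \<open>jm < d\<close>]) simp
  thus ?thesis by (simp add: c_def)
qed

text \<open>Applied to the columns z of the inverse [[I_m, 0], [-A^T, I_n]] of lattice_mat m n A, the
  hypothesis bounds the coordinates of \<pi> and the dual linear forms.\<close>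
lemma lattice_mat_dual_deg_le:
  fixes \<pi> :: "nat \<Rightarrow> 'a::field fls" and e1 e2 \<mu> :: int
  assumes coord: "\<And>z i0. i0 < m + n \<Longrightarrow>
      (\<And>i. i < m + n \<Longrightarrow> mat_vec (m + n) (lattice_mat m n A) z i = (if i = i0 then 1 else 0)) \<Longrightarrow>
      deg_le (\<Sum>r<m + n. z r * \<pi> r) (- (if i0 < m then e1 else e2) - \<mu>)"
  shows "l < n \<Longrightarrow> deg_le (\<pi> (m + l)) (- e2 - \<mu>)"
    and "a < m \<Longrightarrow> deg_le (\<pi> a - (\<Sum>l<n. A a l * \<pi> (m + l))) (- e1 - \<mu>)"
proof -
  assume "l < n"
  define z where "z r = (if r = m + l then 1 else (0::'a fls))" for r
  have "deg_le (\<Sum>r<m + n. z r * \<pi> r) (- (if m + l < m then e1 else e2) - \<mu>)"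
    using \<open>l < n\<close> by (intro coord) (auto simp: mat_vec_lattice_mat z_def)
  moreover have "(\<Sum>r<m + n. z r * \<pi> r) = \<pi> (m + l)"
    using sum_unit_mult[of "m + l" "m + n" \<pi>] \<open>l < n\<close> by (simp add: z_def)
  ultimately show "deg_le (\<pi> (m + l)) (- e2 - \<mu>)" by simp
next
  assume "a < m"
  define z where "z r = (if r < m then (if r = a then 1 else 0) else - A a (r - m))" for r
  have "deg_le (\<Sum>r<m + n. z r * \<pi> r) (- (if a < m then e1 else e2) - \<mu>)"
  proof (rule coord)
    fix i assume "i < m + n"
    have "(\<Sum>k<m. A k (i - m) * z k) = A a (i - m)"
      using sum_unit_mult[OF \<open>a < m\<close>, of "\<lambda>k. A k (i - m)"] by (simp add: z_def mult.commute)
    thus "mat_vec (m + n) (lattice_mat m n A) z i = (if i = a then 1 else 0)"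
      using \<open>i < m + n\<close> \<open>a < m\<close> by (simp add: mat_vec_lattice_mat z_def)
  qed (use \<open>a < m\<close> in simp)
  moreover have "(\<Sum>r<m + n. z r * \<pi> r) = \<pi> a - (\<Sum>l<n. A a l * \<pi> (m + l))"
    using sum_unit_mult[OF \<open>a < m\<close>, of \<pi>]
    by (simp add: sum_lessThan_add_split z_def sum_negf)
  ultimately show "deg_le (\<pi> a - (\<Sum>l<n. A a l * \<pi> (m + l))) (- e1 - \<mu>)"
    using \<open>a < m\<close> by simp
qed

text \<open>The volume bound forces a positive sum of the minima; if at least n + 1 of the m + n minima
  are \<le> 0, the at most m - 1 others carry all of it.\<close>
lemma sum_le_of_many_nonpos:
  fixes \<mu> :: "nat \<Rightarrow> int"
  assumes many: "n + 1 \<le> card {j. j < m + n \<and> \<mu> j \<le> 0}"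
    and bound: "\<And>j. j < m + n \<Longrightarrow> \<mu> j \<le> M" and pos: "0 < (\<Sum>j<m + n. \<mu> j)"
  shows "(\<Sum>j<m + n. \<mu> j) \<le> int (m - 1) * M"
proof -
  define S where "S = {j. j < m + n \<and> \<mu> j \<le> 0}"
  have "S \<subseteq> {..<m + n}" by (auto simp: S_def)
  have "0 < M"
  proof (rule ccontr)
    assume "\<not> 0 < M"
    hence "(\<Sum>j<m + n. \<mu> j) \<le> 0" using bound by (intro sum_nonpos) force
    thus False using pos by simp
  qed
  have "(\<Sum>j<m + n. \<mu> j) \<le> (\<Sum>j<m + n. if j \<in> S then 0 else M)"
    using bound by (intro sum_mono) (auto simp: S_def)
  also have "\<dots> = int (card ({..<m + n} - S)) * M"
    by (simp add: sum.If_cases Diff_eq)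
  also have "\<dots> \<le> int (m - 1) * M"
    using many card_Diff_subset[OF _ \<open>S \<subseteq> {..<m + n}\<close>] card_mono[OF _ \<open>S \<subseteq> {..<m + n}\<close>] \<open>0 < M\<close>
    by (intro mult_right_mono) (auto simp: S_def finite_subset)
  finally show ?thesis .
qed

lemma lin_indep_mono: "lin_indep d t w \<Longrightarrow> t' \<le> t \<Longrightarrow> lin_indep d t' w"
  unfolding lin_indep_def
proof (intro allI impI)
  fix c :: "nat \<Rightarrow> 'a" and s
  assume indep: "\<forall>c. (\<forall>j<d. (\<Sum>s<t. c s * w s j) = 0) \<longrightarrow> (\<forall>s<t. c s = 0)" and "t' \<le> t"
    and rel: "\<forall>j<d. (\<Sum>s<t'. c s * w s j) = 0" and "s < t'"
  have "(\<Sum>s<t. (if s < t' then c s else 0) * w s j) = (\<Sum>s<t'. c s * w s j)" for j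
    using \<open>t' \<le> t\<close> by (intro sum.mono_neutral_cong_right) auto
  hence "\<forall>j<d. (\<Sum>s<t. (if s < t' then c s else 0) * w s j) = 0" using rel by simp
  hence all: "\<forall>s<t. (if s < t' then c s else 0) = 0" by (rule indep[THEN spec, THEN mp])
  show "c s = 0" using spec[OF all, of s] \<open>s < t'\<close> \<open>t' \<le> t\<close> by simp
qed

lemma small_dual_vector:
  fixes A w :: "nat \<Rightarrow> nat \<Rightarrow> 'a::field fls" and m n :: nat and e1 e2 :: int
  defines "ew \<equiv> \<lambda>i. if i < m then e1 else e2"
  assumes w_poly: "\<And>s r. s < n + 1 \<Longrightarrow> r < m + n \<Longrightarrow> is_poly (w s r)"
    and w_small: "\<And>s. s < n + 1 \<Longrightarrow> wdeg_le (m + n) ew (mat_vec (m + n) (lattice_mat m n A) (w s)) 0"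
    and indep: "lin_indep (m + n) (n + 1) w"
    and neg: "int m * e1 + int n * e2 < 0"
  obtains \<mu> \<pi> where "- (int m * e1 + int n * e2) \<le> int (m - 1) * \<mu>"
    and "\<And>r. r < m + n \<Longrightarrow> is_poly (\<pi> r)" and "\<exists>r<m + n. \<pi> r \<noteq> 0"
    and "\<And>l. l < n \<Longrightarrow> deg_le (\<pi> (m + l)) (- e2 - \<mu>)"
    and "\<And>a. a < m \<Longrightarrow> deg_le (\<pi> a - (\<Sum>l<n. A a l * \<pi> (m + l))) (- e1 - \<mu>)"
proof -
  obtain q where basis: "poly_basis (m + n) q"
    and red: "reduced (m + n) ew (\<lambda>j. mat_vec (m + n) (lattice_mat m n A) (q j))"
    using reduced_poly_basis_exists[OF lattice_mat_wdeg_lower_bound[of m n e1 e2 A, folded ew_def]]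
    by blast
  define \<mu> where "\<mu> j = wdeg (m + n) ew (mat_vec (m + n) (lattice_mat m n A) (q j))" for j
  have many: "n + 1 \<le> card {j. j < m + n \<and> \<mu> j \<le> 0}"
    unfolding \<mu>_def by (rule indep_card_le_small_minima[OF basis red w_poly w_small indep])
  hence "0 < m + n" by (cases "m + n") auto
  hence "Max (\<mu> ` {..<m + n}) \<in> \<mu> ` {..<m + n}" by (intro Max_in) auto
  then obtain jm where "jm < m + n" "\<mu> jm = Max (\<mu> ` {..<m + n})" by auto
  hence jm_max: "\<mu> j \<le> \<mu> jm" if "j < m + n" for j using that by simp
  have "(\<Sum>i<m + n. ew i) = int m * e1 + int n * e2"
    by (simp add: sum_lessThan_add_split ew_def)
  hence "- (int m * e1 + int n * e2) \<le> (\<Sum>j<m + n. \<mu> j)"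
    using poly_basis_wdeg_sum_ge[OF basis det_lattice_mat[of m n A], where ew = ew] by (simp add: \<mu>_def)
  with sum_le_of_many_nonpos[OF many jm_max] neg
  have vol: "- (int m * e1 + int n * e2) \<le> int (m - 1) * \<mu> jm" by linarith
  obtain cf where cf_poly: "\<And>i j. i < m + n \<Longrightarrow> j < m + n \<Longrightarrow> is_poly (cf i j)"
    and right: "\<And>i r. i < m + n \<Longrightarrow> r < m + n \<Longrightarrow> (\<Sum>j<m + n. cf i j * q j r) = (if r = i then 1 else 0)"
    using poly_basis_inverse[OF basis] by blast
  define \<pi> where "\<pi> r = cf r jm" for r
  have nonzero: "\<exists>r<m + n. \<pi> r \<noteq> 0"
  proof (rule ccontr)
    assume "\<not> (\<exists>r<m + n. \<pi> r \<noteq> 0)"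
    thus False using poly_basis_left_inverse[OF basis right \<open>jm < m + n\<close> \<open>jm < m + n\<close>]
      by (simp add: \<pi>_def)
  qed
  have coord: "deg_le (\<Sum>r<m + n. z r * \<pi> r) (- (if i0 < m then e1 else e2) - \<mu> jm)"
    if "i0 < m + n" "\<And>i. i < m + n \<Longrightarrow> mat_vec (m + n) (lattice_mat m n A) z i = (if i = i0 then 1 else 0)"
    for z i0
    using reduced_dual_deg_le[OF red right \<open>jm < m + n\<close> that] by (simp add: \<pi>_def \<mu>_def ew_def)
  note dual = lattice_mat_dual_deg_le[where A = A and \<pi> = \<pi> and \<mu> = "\<mu> jm", OF coord]
  have poly: "is_poly (\<pi> r)" if "r < m + n" for r
    using cf_poly that \<open>jm < m + n\<close> by (simp add: \<pi>_def)
  show ?thesis by (rule that[OF vol poly nonzero dual])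
qed

section \<open>Choice of the weights\<close>

text \<open>Logarithms to base R of the bounds in the theorem: R^h bounds the primal heights, R^g the
  primal linear forms after moving A to the centre of the ball, R^Tu and R^Tw the dual heights
  and dual linear forms.\<close>
lemma transference_exponents:
  fixes x y I :: real
  assumes x: "x \<ge> 1" and y: "y \<ge> 1" and I: "I \<ge> 0"
  defines "\<tau> \<equiv> x / (x + y)"
  defines "D \<equiv> x * (x + y)^2" and "Ds \<equiv> y * (x + y)^2"
  defines "h \<equiv> - D + y * (\<tau> + I + 1)" and "g \<equiv> - D + y * \<tau> - x * (1 + I)"
  defines "Tu \<equiv> - Ds + x * (1 + I)" and "Tw \<equiv> - Ds - y * (1 + I) - x"
  shows "x * h + y * g \<le> 0"
    and "x * h + y * g + (x - 1) * (1 - g) \<le> (x - 1) * Tu"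
    and "h + y * g \<le> (x - 1) * Tw"
    and "Tw < 0"
    and "h - (x + y) * (1 + I) = g"
    and "- D - x * (\<tau> + I + 1) - y \<le> g"
proof -
  have xy: "x + y > 0" using x y by simp
  have tx: "\<tau> * (x + y) = x" using xy by (simp add: \<tau>_def)
  have t0: "\<tau> \<ge> 0" "\<tau> \<le> 1" using x y by (auto simp: \<tau>_def field_simps)
  have s3: "(x + y)^3 \<ge> (x + y)^2"
    using xy x y by (simp add: power3_eq_cube power2_eq_square mult_le_cancel_right1 mult_right_mono)
  have s2: "(x + y)^2 = x^2 + 2*x*y + y^2" by (simp add: power2_eq_square algebra_simps)
  have xx: "x^2 \<ge> x" using x by (simp add: power2_eq_square)
  have xyp: "x * y \<ge> 0" "y^2 \<ge> 0" "x * y \<ge> y" using x y by (auto simp: mult_right_mono)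
  have id1: "x * h + y * g = - (x + y) * D + x * y"
  proof -
    have "x * h + y * g = - (x + y) * D + y * (\<tau> * (x + y))"
      by (simp add: h_def g_def algebra_simps)
    thus ?thesis using tx by simp
  qed
  have D3: "(x + y) * D = x * (x + y)^3" by (simp add: D_def power3_eq_cube power2_eq_square algebra_simps)
  have "x * (x + y)^3 \<ge> x * y"
  proof -
    have "(x + y)^3 \<ge> y" using s3 s2 xx xyp x by linarith
    thus ?thesis using x by (intro mult_left_mono) auto
  qed
  thus "x * h + y * g \<le> 0" using id1 D3 by linarith
  have id2: "(x - 1) * Tu - (x * h + y * g + (x - 1) * (1 - g)) = (x + y)^3 - x * y - x + 1 + (x - 1) * y * \<tau>"
  proof -
    have "(x - 1) * Tu - (x * h + y * g + (x - 1) * (1 - g))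
        = (x + y)^3 - y * (\<tau> * (x + y)) - x + 1 + (x - 1) * y * \<tau>"
      by (simp add: Tu_def h_def g_def D_def Ds_def power3_eq_cube power2_eq_square algebra_simps)
    moreover have "y * (\<tau> * (x + y)) = x * y" using tx by simp
    ultimately show ?thesis by linarith
  qed
  have "(x - 1) * y * \<tau> \<ge> 0" using x y t0 by simp
  thus "x * h + y * g + (x - 1) * (1 - g) \<le> (x - 1) * Tu"
    using id2 s3 s2 xx xyp by linarith
  have id3: "(x - 1) * Tw - (h + y * g) = (x + y)^3 - x * (x - 1) - y * \<tau> * (1 + y)"
    by (simp add: Tw_def h_def g_def D_def Ds_def power3_eq_cube power2_eq_square algebra_simps)
  have "y * \<tau> * (1 + y) \<le> y * 1 * (1 + y)" using t0 y by (intro mult_right_mono mult_left_mono) auto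
  moreover have "x * (x - 1) = x^2 - x" by (simp add: power2_eq_square algebra_simps)
  moreover have "y * 1 * (1 + y) = y + y^2" by (simp add: power2_eq_square algebra_simps)
  moreover have "2 * x * y \<ge> y" using xyp by linarith
  ultimately have A: "(x+y)^3 - x*(x-1) - y*\<tau>*(1+y) \<ge> (x+y)^2 - (x^2 - x) - (y + y^2)"
    using s3 by linarith
  have B: "(x+y)^2 - (x^2 - x) - (y + y^2) = 2*x*y + x - y" using s2 by simp
  have C: "2*x*y + x - y \<ge> 0" using xyp x by linarith
  have "(x - 1) * Tw - (h + y * g) \<ge> 0" using id3 A B C by linarith
  thus "h + y * g \<le> (x - 1) * Tw" by linarith
  have "Ds \<ge> 0" using y by (simp add: Ds_def)
  thus "Tw < 0" using x y I by (simp add: Tw_def) (smt (verit) mult_nonneg_nonneg)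
  show "h - (x + y) * (1 + I) = g" by (simp add: h_def g_def algebra_simps)
  have "- D - x * (\<tau> + I + 1) - y - g = - (x + y) * \<tau> - y" by (simp add: g_def algebra_simps)
  also have "\<dots> = - x - y" using tx by (simp add: algebra_simps)
  finally show "- D - x * (\<tau> + I + 1) - y \<le> g" using x y by simp
qed

text \<open>Measured in units of log R / log k, the bounds of the previous lemma are rounded to integer
  weights e1 and e2.\<close>
lemma integer_weights:
  fixes k R h g Tu Tw :: real and m n :: nat
  assumes "1 < k" "k < R" "n \<ge> 1"
    and neg: "m * h + n * g \<le> 0"
    and ex_u: "m * h + n * g + (real m - 1) * (1 - g) \<le> (real m - 1) * Tu"
    and ex_w: "h + n * g \<le> (real m - 1) * Tw" "Tw < 0"
  obtains e1 e2 :: int where "R powr h \<le> k powi (e1 + 1)" "R powr g \<le> k powi (e2 + 1)"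
    and "int m * e1 + int n * e2 < 0"
    and "\<And>\<mu>. - (int m * e1 + int n * e2) \<le> int (m - 1) * \<mu> \<Longrightarrow>
           k powi (- e2 - \<mu>) < R powr Tu \<and> k powi (- e1 - \<mu>) < R powr Tw \<and> - e1 - \<mu> < 0"
proof -
  define L where "L = ln R / ln k"
  have "0 < ln k" "ln k < ln R" using assms(1,2) by auto
  hence L: "1 < L" by (simp add: L_def)
  have R_powr: "R powr a = k powr (a * L)" for a
    using assms(1,2) \<open>0 < ln k\<close> by (simp add: powr_def L_def)
  have k_powi: "k powi e = k powr real_of_int e" for e
    using assms(1) by (simp add: powr_real_of_int')
  define e1 where "e1 = \<lceil>h * L\<rceil> - 1"
  define e2 where "e2 = \<lceil>g * L\<rceil> - 1"
  have e1: "real_of_int e1 < h * L" "h * L \<le> real_of_int (e1 + 1)" unfolding e1_def by linarith+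
  have e2: "real_of_int e2 < g * L" "g * L \<le> real_of_int e2 + 1" unfolding e2_def by linarith+
  define X where "X = real m"
  define Y where "Y = real n"
  have Y: "1 \<le> Y" using assms(3) by (simp add: Y_def)
  have X: "0 \<le> X" by (simp add: X_def)
  have "X * e1 \<le> X * (h * L)" using e1 X by (intro mult_left_mono) auto
  moreover have "Y * e2 < Y * (g * L)" using e2 Y by (intro mult_strict_left_mono) auto
  moreover have "(X * h + Y * g) * L \<le> 0" using neg L by (intro mult_nonpos_nonneg) (auto simp: X_def Y_def)
  ultimately have "X * e1 + Y * e2 < 0" by (simp add: algebra_simps)
  hence "real_of_int (int m * e1 + int n * e2) < 0" by (simp add: X_def Y_def)
  hence weights_neg: "int m * e1 + int n * e2 < 0" by (simp only: of_int_less_0_iff)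
  have dual: "k powi (- e2 - \<mu>) < R powr Tu \<and> k powi (- e1 - \<mu>) < R powr Tw \<and> - e1 - \<mu> < 0"
    if vol: "- (int m * e1 + int n * e2) \<le> int (m - 1) * \<mu>" for \<mu>
  proof -
    have "2 \<le> m" using vol weights_neg by (cases "m - 1") auto
    hence X2: "2 \<le> X" and m1: "real (m - 1) = X - 1" by (auto simp: X_def)
    have "real_of_int (- (int m * e1 + int n * e2)) \<le> real_of_int (int (m - 1) * \<mu>)"
      using vol by (simp only: of_int_le_iff)
    hence "- (real m * e1 + real n * e2) \<le> real (m - 1) * \<mu>" by simp
    hence U: "- (X * e1 + Y * e2) \<le> (X - 1) * \<mu>" by (simp only: m1 X_def Y_def)
    have a: "X * e1 < X * (h * L)" using e1 X2 by (intro mult_strict_left_mono) auto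
    have b: "Y * e2 < Y * (g * L)" using e2 Y by (intro mult_strict_left_mono) auto
    have c: "(X - 1) * (- e2) \<le> (X - 1) * (L - g * L)" using e2 X2 L by (intro mult_left_mono) auto
    have d: "(X * h + Y * g + (X - 1) * (1 - g)) * L \<le> ((X - 1) * Tu) * L"
      using ex_u L by (intro mult_right_mono) (auto simp: X_def Y_def)
    have "(X - 1) * (- e2 - \<mu>) < (X - 1) * (Tu * L)"
      using a b c d U by (simp add: algebra_simps)
    hence u: "- e2 - \<mu> < Tu * L" using X2 by (simp add: mult_less_cancel_left)
    have b': "Y * e2 \<le> Y * (g * L)" using e2 Y by (intro mult_left_mono) auto
    have d': "(h + Y * g) * L \<le> ((X - 1) * Tw) * L"
      using ex_w L by (intro mult_right_mono) (auto simp: X_def Y_def)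
    have "(X - 1) * (- e1 - \<mu>) < (X - 1) * (Tw * L)"
      using e1 b' d' U by (simp add: algebra_simps)
    hence w: "- e1 - \<mu> < Tw * L" using X2 by (simp add: mult_less_cancel_left)
    moreover have "Tw * L < 0" using ex_w(2) L by (simp add: mult_neg_pos)
    ultimately show ?thesis
      using u assms(1) by (simp add: R_powr k_powi)
  qed
  show ?thesis
  proof (rule that)
    show "R powr h \<le> k powi (e1 + 1)" "R powr g \<le> k powi (e2 + 1)"
      using e1 e2 assms(1) by (simp_all add: R_powr k_powi)
    show "int m * e1 + int n * e2 < 0" by (rule weights_neg)
  qed (rule dual)
qed

section \<open>Primal and dual solutions\<close>

lemma poly_to_L_uminus: "poly_to_L (- p) = - poly_to_L p"
  by (rule fls_eqI) (simp add: poly_to_L_nth)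

lemma Max_image_less_iff:
  fixes f :: "nat \<Rightarrow> real"
  assumes "N \<ge> 1"
  shows "Max (f ` {..<N}) < C \<longleftrightarrow> (\<forall>l<N. f l < C)"
proof -
  have "0 \<in> {..<N}" using assms by simp
  thus ?thesis by (subst Max_less_iff) auto
qed

lemma Max_image_pos:
  fixes f :: "nat \<Rightarrow> real"
  assumes "l < N" "f l > 0"
  shows "0 < Max (f ` {..<N})"
proof -
  have "f l \<le> Max (f ` {..<N})" using assms by (intro Max_ge) auto
  thus ?thesis using assms by linarith
qed

text \<open>A primal solution for some A' in the ball gives a lattice point for the centre A0: moving
  from A' to A0 changes the linear forms by at most r times the height.\<close>
lemma primal_lattice_point:
  fixes A0 A' :: "nat \<Rightarrow> nat \<Rightarrow> 'a::{field,finite} fls" and x :: "nat \<Rightarrow> 'a fls"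
  assumes "A' \<in> matball m n A0 r" "0 < r"
    and height: "\<And>j. j < m \<Longrightarrow> labs (x j) < H"
    and forms: "\<And>l. l < n \<Longrightarrow> labs (dotp (m + n) x (col (tildeA m n A') l)) < G"
    and "r * H \<le> G" "H \<le> real CARD('a) powi (e1 + 1)" "G \<le> real CARD('a) powi (e2 + 1)"
  shows "wdeg_le (m + n) (\<lambda>i. if i < m then e1 else e2) (mat_vec (m + n) (lattice_mat m n A0) x) 0"
  unfolding wdeg_le_def
proof (intro allI impI)
  fix i assume "i < m + n"
  show "deg_le (mat_vec (m + n) (lattice_mat m n A0) x i) (0 + (if i < m then e1 else e2))"
  proof (cases "i < m")
    case True
    thus ?thesis
      using height[OF True] \<open>H \<le> _\<close> by (auto simp: mat_vec_lattice_mat intro!: labs_less_imp_deg_le)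
  next
    case False
    then obtain l where l: "l < n" "i = m + l" using \<open>i < m + n\<close> by (metis add_diff_inverse_nat add_less_cancel_left)
    have "labs ((A0 k l - A' k l) * x k) < G" if "k < m" for k
    proof -
      have "labs (A0 k l - A' k l) \<le> r"
        using labs_le_matnorm[OF that l(1), of "\<lambda>i j. A' i j - A0 i j"] assms(1)
        by (simp add: matball_def labs_minus_commute)
      hence "labs ((A0 k l - A' k l) * x k) \<le> r * labs (x k)"
        using labs_nonneg[of "x k"] by (simp add: labs_mult mult_right_mono)
      also have "\<dots> < r * H" using height[OF that] \<open>0 < r\<close> by simp
      finally show ?thesis using \<open>r * H \<le> G\<close> by simp
    qed
    hence "labs (\<Sum>k<m. (A0 k l - A' k l) * x k) < G"
      using forms[OF l(1)] labs_nonneg by (intro labs_sum_less) (auto intro: le_less_trans)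
    moreover have "mat_vec (m + n) (lattice_mat m n A0) x i
        = dotp (m + n) x (col (tildeA m n A') l) + (\<Sum>k<m. (A0 k l - A' k l) * x k)"
      using l \<open>i < m + n\<close>
      by (simp add: mat_vec_lattice_mat dotp_tildeA algebra_simps sum_subtractf mult.commute)
    ultimately have "labs (mat_vec (m + n) (lattice_mat m n A0) x i) < G"
      using forms[OF l(1)] labs_add le_less_trans by fastforce
    thus ?thesis using False \<open>G \<le> _\<close> by (auto intro!: labs_less_imp_deg_le)
  qed
qed

lemma dual_solution:
  fixes A :: "nat \<Rightarrow> nat \<Rightarrow> 'a::{field,finite} fls" and \<pi> :: "nat \<Rightarrow> 'a fls"
  assumes "m \<ge> 1" "n \<ge> 1" and poly: "\<And>r. r < m + n \<Longrightarrow> is_poly (\<pi> r)"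
    and nonzero: "\<exists>l<n. \<pi> (m + l) \<noteq> 0"
    and height: "\<And>l. l < n \<Longrightarrow> labs (\<pi> (m + l)) < U"
    and forms: "\<And>a. a < m \<Longrightarrow> labs (\<pi> a - (\<Sum>l<n. A a l * \<pi> (m + l))) < W"
  obtains q :: "nat \<Rightarrow> 'a poly" where "\<forall>j \<ge> m + n. q j = 0"
    and "0 < Max ((\<lambda>l. labs (poly_to_L (q l))) ` {..<n})"
    and "Max ((\<lambda>l. labs (poly_to_L (q l))) ` {..<n}) < U"
    and "Max ((\<lambda>l. labs (dotp (m + n) (\<lambda>j. poly_to_L (q j)) (col (tildeA_star m n A) l))) ` {..<m}) < W"
proof -
  have "\<forall>r\<in>{..<m + n}. \<exists>p. poly_to_L p = \<pi> r" using poly is_poly_imp_poly_to_L by blast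
  from bchoice[OF this] obtain p where p: "\<And>r. r < m + n \<Longrightarrow> poly_to_L (p r) = \<pi> r"
    by auto
  define q where "q j = (if j < n then p (m + j) else if j < m + n then - p (j - n) else 0)" for j
  have q_upper: "poly_to_L (q l) = \<pi> (m + l)" if "l < n" for l
    using that p by (simp add: q_def)
  have q_lower: "poly_to_L (q (n + a)) = - \<pi> a" if "a < m" for a
    using that p by (simp add: q_def poly_to_L_uminus)
  have forms_q: "dotp (m + n) (\<lambda>j. poly_to_L (q j)) (col (tildeA_star m n A) a)
          = - (\<pi> a - (\<Sum>l<n. A a l * \<pi> (m + l)))" if "a < m" for a
    using that by (simp add: dotp_tildeA_star q_upper q_lower mult.commute)
  obtain l where "l < n" "\<pi> (m + l) \<noteq> 0" using nonzero by blast
  hence "0 < Max ((\<lambda>l. labs (poly_to_L (q l))) ` {..<n})"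
    by (intro Max_image_pos[of l]) (simp_all add: q_upper labs_pos)
  moreover have "Max ((\<lambda>l. labs (poly_to_L (q l))) ` {..<n}) < U"
    using height assms(2) by (simp add: Max_image_less_iff q_upper)
  moreover have "Max ((\<lambda>l. labs (dotp (m + n) (\<lambda>j. poly_to_L (q j)) (col (tildeA_star m n A) l))) ` {..<m}) < W"
  proof -
    have "labs (dotp (m + n) (\<lambda>j. poly_to_L (q j)) (col (tildeA_star m n A) a)) < W" if "a < m" for a
      unfolding forms_q[OF that] labs_uminus by (rule forms[OF that])
    thus ?thesis using assms(1) by (simp add: Max_image_less_iff)
  qed
  ultimately show ?thesis using that[of q] by (simp add: q_def)
qed

lemma primal_dual_weights:
  fixes m n i :: nat and R r :: real
  assumes m1: "m \<ge> 1" and n1: "n \<ge> 1" and R: "real CARD('a::{field,finite}) < R"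
    and r0: "0 < r" and r_less: "r < R powr (- real ((m + n) * (1 + i)))"
  obtains e1 e2 :: int where "int m * e1 + int n * e2 < 0"
    and "\<And>(A0 :: nat \<Rightarrow> nat \<Rightarrow> 'a fls) A' x. A' \<in> matball m n A0 r \<Longrightarrow>
      (\<And>j. j < m \<Longrightarrow> labs (x j)
          < R powr (- real (m * (m + n)^2)) * R powr (real n * (real m / real (m + n) + real i + 1))) \<Longrightarrow>
      (\<And>l. l < n \<Longrightarrow> labs (dotp (m + n) x (col (tildeA m n A') l))
          < R powr (- real (m * (m + n)^2)) * R powr (- real m * (real m / real (m + n) + real i + 1) - real n)) \<Longrightarrow>
      wdeg_le (m + n) (\<lambda>i. if i < m then e1 else e2) (mat_vec (m + n) (lattice_mat m n A0) x) 0"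
    and "\<And>\<mu>. - (int m * e1 + int n * e2) \<le> int (m - 1) * \<mu> \<Longrightarrow>
      real CARD('a) powi (- e2 - \<mu>) < R powr (- real (n * (m + n)^2)) * R powr (real (m * (1 + i))) \<and>
      real CARD('a) powi (- e1 - \<mu>) < R powr (- real (n * (m + n)^2)) * R powr (- real (n * (1 + i)) - real m) \<and>
      - e1 - \<mu> < 0"
proof -
  define x y I where "x = real m" and "y = real n" and "I = real i"
  define \<tau> where "\<tau> = x / (x + y)"
  define h where "h = - (x * (x + y)^2) + y * (\<tau> + I + 1)"
  define g where "g = - (x * (x + y)^2) + y * \<tau> - x * (1 + I)"
  define Tu where "Tu = - (y * (x + y)^2) + x * (1 + I)"
  define Tw where "Tw = - (y * (x + y)^2) - y * (1 + I) - x"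
  have "x \<ge> 1" "y \<ge> 1" "I \<ge> 0" using m1 n1 by (auto simp: x_def y_def I_def)
  note ex = transference_exponents[OF this, folded \<tau>_def, folded h_def g_def Tu_def Tw_def]
  have "1 < real CARD('a)" by (rule card_field_gt_1)
  then obtain e1 e2 where e1: "R powr h \<le> real CARD('a) powi (e1 + 1)"
    and e2: "R powr g \<le> real CARD('a) powi (e2 + 1)"
    and neg: "int m * e1 + int n * e2 < 0"
    and dual: "\<And>\<mu>. - (int m * e1 + int n * e2) \<le> int (m - 1) * \<mu> \<Longrightarrow>
       real CARD('a) powi (- e2 - \<mu>) < R powr Tu \<and> real CARD('a) powi (- e1 - \<mu>) < R powr Tw \<and> - e1 - \<mu> < 0"
    using integer_weights[OF _ R n1 ex(1-4)[unfolded x_def y_def]] by blast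
  have pw: "R powr a * R powr b = R powr c" if "a + b = c" for a b c
    using that by (simp add: powr_add[symmetric])
  have powers:
    "R powr (- real (m * (m + n)^2)) * R powr (real n * (real m / real (m + n) + real i + 1)) = R powr h"
    "R powr (- real (m * (m + n)^2)) * R powr (- real m * (real m / real (m + n) + real i + 1) - real n)
       = R powr (- (x * (x + y)^2) - x * (\<tau> + I + 1) - y)"
    "R powr (- real (n * (m + n)^2)) * R powr (real (m * (1 + i))) = R powr Tu"
    "R powr (- real (n * (m + n)^2)) * R powr (- real (n * (1 + i)) - real m) = R powr Tw"
    by (rule pw, simp add: h_def Tu_def Tw_def x_def y_def I_def \<tau>_def algebra_simps)+
  have "1 < R" using R \<open>1 < real CARD('a)\<close> by simp
  have "r * R powr h \<le> R powr (- (x + y) * (1 + I)) * R powr h"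
    using r_less by (intro mult_right_mono) (simp_all add: x_def y_def I_def algebra_simps)
  also have "\<dots> = R powr g" using ex(5) by (intro pw) (simp add: algebra_simps)
  finally have "r * R powr h \<le> R powr g" .
  moreover have "R powr (- (x * (x + y)^2) - x * (\<tau> + I + 1) - y) \<le> R powr g"
    using ex(6) \<open>1 < R\<close> by simp
  ultimately have primal:
    "wdeg_le (m + n) (\<lambda>i. if i < m then e1 else e2) (mat_vec (m + n) (lattice_mat m n A0) u) 0"
    if "A' \<in> matball m n A0 r" "\<And>j. j < m \<Longrightarrow> labs (u j) < R powr h"
      "\<And>l. l < n \<Longrightarrow> labs (dotp (m + n) u (col (tildeA m n A') l))
         < R powr (- (x * (x + y)^2) - x * (\<tau> + I + 1) - y)"
    for A0 A' :: "nat \<Rightarrow> nat \<Rightarrow> 'a fls" and u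
    using that by (intro primal_lattice_point[OF that(1) r0 _ _ _ e1 e2]) (auto intro: less_le_trans)
  show ?thesis by (rule that[OF neg primal[folded powers] dual[folded powers]])
qed

lemma few_independent_primal_solutions:
  fixes m n i t :: nat and R r :: real and A0 :: "nat \<Rightarrow> nat \<Rightarrow> 'a::{field,finite} fls"
    and v :: "nat \<Rightarrow> nat \<Rightarrow> 'a poly"
  assumes m1: "m \<ge> 1" and n1: "n \<ge> 1" and R: "real CARD('a) < R"
    and r0: "0 < r" and r_less: "r < R powr (- real ((m + n) * (1 + i)))"
    and no_dual: "\<not> (\<exists>q\<in>{q :: nat \<Rightarrow> 'a poly. \<forall>j \<ge> m + n. q j = 0}. \<exists>A\<in>matball m n A0 r.
       0 < Max ((\<lambda>l. labs (poly_to_L (q l))) ` {..<n}) \<and>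
       Max ((\<lambda>l. labs (poly_to_L (q l))) ` {..<n})
         < R powr (- real (n * (m + n)^2)) * R powr (real (m * (1 + i))) \<and>
       Max ((\<lambda>l. labs (dotp (m + n) (\<lambda>j. poly_to_L (q j)) (col (tildeA_star m n A) l))) ` {..<m})
         < R powr (- real (n * (m + n)^2)) * R powr (- real (n * (1 + i)) - real m))"
    and primal: "\<forall>s<t. v s \<in> {q :: nat \<Rightarrow> 'a poly. \<forall>j \<ge> m + n. q j = 0} \<and> (\<exists>A\<in>matball m n A0 r.
       0 < Max ((\<lambda>l. labs (poly_to_L (v s l))) ` {..<m}) \<and>
       Max ((\<lambda>l. labs (poly_to_L (v s l))) ` {..<m})
         < R powr (- real (m * (m + n)^2)) * R powr (real n * (real m / real (m + n) + real i + 1)) \<and>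
       Max ((\<lambda>l. labs (dotp (m + n) (\<lambda>j. poly_to_L (v s j)) (col (tildeA m n A) l))) ` {..<n})
         < R powr (- real (m * (m + n)^2)) * R powr (- real m * (real m / real (m + n) + real i + 1) - real n))"
    and indep: "lin_indep (m + n) t (\<lambda>s j. poly_to_L (v s j))"
  shows "t \<le> n"
proof (rule ccontr)
  assume "\<not> t \<le> n"
  obtain e1 e2 where neg: "int m * e1 + int n * e2 < 0"
    and primal_point: "\<And>(A0 :: nat \<Rightarrow> nat \<Rightarrow> 'a fls) A' x. A' \<in> matball m n A0 r \<Longrightarrow>
      (\<And>j. j < m \<Longrightarrow> labs (x j)
          < R powr (- real (m * (m + n)^2)) * R powr (real n * (real m / real (m + n) + real i + 1))) \<Longrightarrow>
      (\<And>l. l < n \<Longrightarrow> labs (dotp (m + n) x (col (tildeA m n A') l))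
          < R powr (- real (m * (m + n)^2)) * R powr (- real m * (real m / real (m + n) + real i + 1) - real n)) \<Longrightarrow>
      wdeg_le (m + n) (\<lambda>i. if i < m then e1 else e2) (mat_vec (m + n) (lattice_mat m n A0) x) 0"
    and dual: "\<And>\<mu>. - (int m * e1 + int n * e2) \<le> int (m - 1) * \<mu> \<Longrightarrow>
      real CARD('a) powi (- e2 - \<mu>) < R powr (- real (n * (m + n)^2)) * R powr (real (m * (1 + i))) \<and>
      real CARD('a) powi (- e1 - \<mu>) < R powr (- real (n * (m + n)^2)) * R powr (- real (n * (1 + i)) - real m) \<and>
      - e1 - \<mu> < 0"
    using primal_dual_weights[OF m1 n1 R r0 r_less] by blast
  have small: "wdeg_le (m + n) (\<lambda>i. if i < m then e1 else e2)
      (mat_vec (m + n) (lattice_mat m n A0) (\<lambda>j. poly_to_L (v s j))) 0" if "s < t" for s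
    using primal[rule_format, OF that] m1 n1
    by (elim conjE bexE, intro primal_point) (auto simp: Max_image_less_iff)
  have "lin_indep (m + n) (n + 1) (\<lambda>s j. poly_to_L (v s j))"
    using \<open>\<not> t \<le> n\<close> by (intro lin_indep_mono[OF indep]) simp
  then obtain \<mu> \<pi> where vol: "- (int m * e1 + int n * e2) \<le> int (m - 1) * \<mu>"
    and poly: "\<And>r. r < m + n \<Longrightarrow> is_poly (\<pi> r)" and "\<exists>r<m + n. \<pi> r \<noteq> 0"
    and upper: "\<And>l. l < n \<Longrightarrow> deg_le (\<pi> (m + l)) (- e2 - \<mu>)"
    and lower: "\<And>a. a < m \<Longrightarrow> deg_le (\<pi> a - (\<Sum>l<n. A0 a l * \<pi> (m + l))) (- e1 - \<mu>)"
    using small_dual_vector[of n m "\<lambda>s j. poly_to_L (v s j)" e1 e2 A0] small neg \<open>\<not> t \<le> n\<close>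
    by (auto simp: is_poly_poly_to_L)
  have "\<exists>l<n. \<pi> (m + l) \<noteq> 0"
  proof (rule ccontr)
    assume "\<not> (\<exists>l<n. \<pi> (m + l) \<noteq> 0)"
    hence "\<pi> a = 0" if "a < m" for a
      using lower[OF that] poly[of a] dual[OF vol] that by (auto intro: is_poly_deg_le_neg)
    thus False using \<open>\<exists>r<m + n. \<pi> r \<noteq> 0\<close> \<open>\<not> (\<exists>l<n. \<pi> (m + l) \<noteq> 0)\<close>
      by (metis add_diff_inverse_nat nat_add_left_cancel_less)
  qed
  define A where "A = (\<lambda>a b. if a < m \<and> b < n then A0 a b else 0)"
  have "A \<in> matball m n A0 r"
    using matnorm_zero[OF m1 n1, of "\<lambda>a b. A a b - A0 a b"] r0 by (auto simp: matball_def A_def)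
  moreover obtain q :: "nat \<Rightarrow> 'a poly" where "\<forall>j \<ge> m + n. q j = 0"
    and "0 < Max ((\<lambda>l. labs (poly_to_L (q l))) ` {..<n})"
    and "Max ((\<lambda>l. labs (poly_to_L (q l))) ` {..<n})
           < R powr (- real (n * (m + n)^2)) * R powr (real (m * (1 + i)))"
    and "Max ((\<lambda>l. labs (dotp (m + n) (\<lambda>j. poly_to_L (q j)) (col (tildeA_star m n A) l))) ` {..<m})
           < R powr (- real (n * (m + n)^2)) * R powr (- real (n * (1 + i)) - real m)"
  proof (rule dual_solution[OF m1 n1 poly \<open>\<exists>l<n. \<pi> (m + l) \<noteq> 0\<close>])
    show "labs (\<pi> (m + l)) < R powr (- real (n * (m + n)^2)) * R powr (real (m * (1 + i)))"
      if "l < n" for l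
      using deg_le_imp_labs_le[OF upper[OF that]] dual[OF vol] by linarith
    show "labs (\<pi> a - (\<Sum>l<n. A a l * \<pi> (m + l)))
            < R powr (- real (n * (m + n)^2)) * R powr (- real (n * (1 + i)) - real m)"
      if "a < m" for a
      using deg_le_imp_labs_le[OF lower[OF that]] dual[OF vol] that by (simp add: A_def)
  qed
  ultimately show False using no_dual by blast
qed

theorem lemma3p2:
  fixes \<sigma> :: real and m n :: nat
  assumes "\<sigma> > 0" and "m \<ge> 1" and "n \<ge> 1"
  shows "\<exists>R0 \<ge> 1. \<forall>R \<ge> R0. \<forall>i::nat. \<forall>(A0 :: nat \<Rightarrow> nat \<Rightarrow> 'a::{field,finite} fls) r.
    (let \<delta> = R powr (- real (m * (m + n)^2));
         \<delta>s = R powr (- real (n * (m + n)^2));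
         \<tau> = real m / real (m + n);
         B = matball m n A0 r;
         PolVec = {q :: nat \<Rightarrow> 'a poly. \<forall>j \<ge> m + n. q j = 0}
     in 0 < r \<and> r < R powr (- real ((m + n) * (1 + i))) \<and>
        (\<forall>A\<in>B. matnorm m n A \<le> \<sigma>) \<and>
        \<not> (\<exists>q\<in>PolVec. \<exists>A\<in>B.
              0 < Max ((\<lambda>l. labs (poly_to_L (q l))) ` {..<n}) \<and>
              Max ((\<lambda>l. labs (poly_to_L (q l))) ` {..<n}) < \<delta>s * R powr (real (m * (1 + i))) \<and>
              Max ((\<lambda>l. labs (dotp (m + n) (\<lambda>j. poly_to_L (q j)) (col (tildeA_star m n A) l))) ` {..<m})
                < \<delta>s * R powr (- real (n * (1 + i)) - real m))
     \<longrightarrow> (\<forall>t (v :: nat \<Rightarrow> nat \<Rightarrow> 'a poly).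
            (\<forall>s<t. v s \<in> PolVec \<and> (\<exists>A\<in>B.
               0 < Max ((\<lambda>l. labs (poly_to_L (v s l))) ` {..<m}) \<and>
               Max ((\<lambda>l. labs (poly_to_L (v s l))) ` {..<m}) < \<delta> * R powr (real n * (\<tau> + real i + 1)) \<and>
               Max ((\<lambda>l. labs (dotp (m + n) (\<lambda>j. poly_to_L (v s j)) (col (tildeA m n A) l))) ` {..<n})
                 < \<delta> * R powr (- real m * (\<tau> + real i + 1) - real n)))
            \<and> lin_indep (m + n) t (\<lambda>s j. poly_to_L (v s j))
            \<longrightarrow> t \<le> n))"
proof (unfold Let_def, intro exI[of _ "real CARD('a) + 1"] conjI allI impI)
  show "1 \<le> real CARD('a) + 1" by simp
qed (elim conjE, rule few_independent_primal_solutions[OF assms(2,3)]; (assumption | linarith))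

end
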